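(* Assume Assumption B and that the design is strongly stable with limit $p^\star$. Let $N_1=\sum_{i=1}^NK_i$, $N_0=N-N_1$, $$\widehat\sigma_0^2=\frac1{\max\{N_0,1\}}\sum_{i=1}^N(1-K_i)\big(Y_i-\widehat Y_{i-1}(0)\big)^2,\qquad \widehat\sigma_1^2=\frac1{\max\{N_1,1\}}\sum_{i=1}^NK_i\big(Y_i-\widehat Y_{i-1}(1)\big)^2,$$ $$\widehat V^{\mathrm{AIPW}}_{\mathrm{strong}}=\Big(\widehat\sigma_0\sqrt{\tfrac{p^\star}{1-p^\star}}+\widehat\sigma_1\sqrt{\tfrac{1-p^\star}{p^\star}}\Big)^2,$$ with $\widehat\sigma_\ell=\sqrt{\widehat\sigma_\ell^2}$. Then $\widehat\sigma_0^2\xrightarrow{p}\sigma_0^2$, $\widehat\sigma_1^2\xrightarrow{p}\sigma_1^2$; $\widehat V^{\mathrm{AIPW}}_{\mathrm{strong}}$ converges in probability to $\big(\sigma_0\sqrt{p^\star/(1-p^\star)}+\sigma_1\sqrt{(1-p^\star)/p^\star}\big)^2$, which is $\ge V^{\mathrm{AIPW}}_{\mathrm{strong}}:=\sigma_0^2\frac{p^\star}{1-p^\star}+\sigma_1^2\frac{1-p^\star}{p^\star}+2\sigma_{01}$ (conservative); and $\widehat V^{\mathrm{AIPW}}_{\mathrm{strong}}$ is consistent for $V^{\mathrm{AIPW}}_{\mathrm{strong}}$ when the potential outcomes satisfy generalized treatment effect homogeneity, i.e. $Y_i(1)-\bar Y_N(1)$ is proportional to $Y_i(0)-\bar Y_N(0)$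 for all $i$.
   Context: Setup. Let $(Y_i(0),Y_i(1))_{i\ge1}$ be a fixed (non-random) sequence of pairs of real numbers (potential outcomes under control and treatment). For each $N$ the experiment consists of units $1,\dots,N$. Random treatment indicators $K_1,K_2,\dots\in\{0,1\}$ are assigned sequentially and the observed outcome is $Y_i=K_iY_i(1)+(1-K_i)Y_i(0)$. Let $\mathcal F_0$ be the trivial $\sigma$-field and $\mathcal F_{i-1}=\sigma(K_1,Y_1,\dots,K_{i-1},Y_{i-1})$. A sequential design is a sequence of random variables $(p_i)_{i\ge1}$ (inclusion probabilities) such that $p_i$ is $\mathcal F_{i-1}$-measurable and $\mathbb P(K_i=1\mid\mathcal F_{i-1})=p_i$. $\bar Y_N(\ell)=\frac1N\sum_{i=1}^NY_i(\ell)$. Running estimates: $\widehat Y_0(0)=\widehat Y_0(1)=0$ and for $i\ge2$, $\widehat Y_{i-1}(0)=\frac1{i-1}\sum_{j=1}^{i-1}\frac{(1-K_j)Y_j}{1-p_j}$, $\widehat Y_{i-1}(1)=\frac1{i-1}\sum_{j=1}^{i-1}\frac{K_jY_j}{p_j}$. Strong design stability: there is a non-random $p^\star\in(0,1)$ with $p_i\xrightarrow{p}p^\star$ as $i\to\infty$. Assumption B: (a) there is $\delta\in(0,1)$ with $p_i\in[\delta,1-\delta]$ for all $i\ge1$; (b) there is $M>0$ with $|Y_i(\ell)|\le M$ for all $i\ge1$, $\ell\in\{0,1\}$; (c) for $\ell\in\{0,1\}$ the limits $\bar Y_\ell=\lim_N\bar Y_N(\ell)$, $\sigma_\ell^2=\lim_N\frac1N\sum_{i=1}^N(Y_i(\ell)-\bar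 Y_N(\ell))^2$ and $\sigma_{01}=\lim_N\frac1N\sum_{i=1}^N(Y_i(0)-\bar Y_N(0))(Y_i(1)-\bar Y_N(1))$ exist, with $\sigma_0^2,\sigma_1^2>0$; $\sigma_\ell=\sqrt{\sigma_\ell^2}$. *)

theory Defs
  imports "HOL-Probability.Probability"
begin

definition conv_in_prob :: "'a measure \<Rightarrow> (nat \<Rightarrow> 'a \<Rightarrow> real) \<Rightarrow> real \<Rightarrow> bool" where
  "conv_in_prob M X c \<longleftrightarrow>
     (\<forall>e>0. (\<lambda>n. measure M {\<omega> \<in> space M. \<bar>X n \<omega> - c\<bar> > e}) \<longlonglongrightarrow> 0)"

text \<open>Observed outcome Y_i = K_i Y_i(1) + (1 - K_i) Y_i(0); units are indexed from 1.\<close>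
definition Yobs :: "(nat \<Rightarrow> 'a \<Rightarrow> real) \<Rightarrow> (nat \<Rightarrow> real) \<Rightarrow> (nat \<Rightarrow> real) \<Rightarrow> nat \<Rightarrow> 'a \<Rightarrow> real" where
  "Yobs K Y0 Y1 i \<omega> = K i \<omega> * Y1 i + (1 - K i \<omega>) * Y0 i"

text \<open>The sigma-field F_{i-1} = sigma(K_1, Y_1, ..., K_{i-1}, Y_{i-1}) (trivial for i = 1).\<close>
definition past :: "'a measure \<Rightarrow> (nat \<Rightarrow> 'a \<Rightarrow> real) \<Rightarrow> (nat \<Rightarrow> real) \<Rightarrow> (nat \<Rightarrow> real) \<Rightarrow> nat \<Rightarrow> 'a measure" where
  "past M K Y0 Y1 i = sigma (space M)
     (\<Union>j\<in>{1..<i}. {K j -` B \<inter> space M | B. B \<in> sets borel}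
                 \<union> {Yobs K Y0 Y1 j -` B \<inter> space M | B. B \<in> sets borel})"

text \<open>Sequential design: p_i is F_{i-1}-measurable and P(K_i = 1 | F_{i-1}) = p_i
  (written via the defining property of conditional probability), for all i >= 1.\<close>
definition sequential_design :: "'a measure \<Rightarrow> (nat \<Rightarrow> 'a \<Rightarrow> real) \<Rightarrow> (nat \<Rightarrow> real) \<Rightarrow> (nat \<Rightarrow> real)
     \<Rightarrow> (nat \<Rightarrow> 'a \<Rightarrow> real) \<Rightarrow> bool" where
  "sequential_design M K Y0 Y1 p \<longleftrightarrow>
     (\<forall>i\<ge>1. K i \<in> borel_measurable M \<and> (\<forall>\<omega>\<in>space M. K i \<omega> \<in> {0, 1})
        \<and> p i \<in> borel_measurable (past M K Y0 Y1 i)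
        \<and> (\<forall>A \<in> sets (past M K Y0 Y1 i).
              measure M ({\<omega> \<in> space M. K i \<omega> = 1} \<inter> A)
                = (\<integral>\<omega>. indicator A \<omega> * p i \<omega> \<partial>M)))"

definition Yhat0 :: "(nat \<Rightarrow> 'a \<Rightarrow> real) \<Rightarrow> (nat \<Rightarrow> 'a \<Rightarrow> real) \<Rightarrow> (nat \<Rightarrow> real) \<Rightarrow> (nat \<Rightarrow> real)
     \<Rightarrow> nat \<Rightarrow> 'a \<Rightarrow> real" where
  "Yhat0 K p Y0 Y1 n \<omega> = (if n = 0 then 0 else
      (1 / real n) * (\<Sum>j=1..n. (1 - K j \<omega>) * Yobs K Y0 Y1 j \<omega> / (1 - p j \<omega>)))"

definition Yhat1 :: "(nat \<Rightarrow> 'a \<Rightarrow> real) \<Rightarrow> (nat \<Rightarrow> 'a \<Rightarrow> real) \<Rightarrow> (nat \<Rightarrow> real) \<Rightarrow> (nat \<Rightarrow> real)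
     \<Rightarrow> nat \<Rightarrow> 'a \<Rightarrow> real" where
  "Yhat1 K p Y0 Y1 n \<omega> = (if n = 0 then 0 else
      (1 / real n) * (\<Sum>j=1..n. K j \<omega> * Yobs K Y0 Y1 j \<omega> / p j \<omega>))"

definition N1 :: "(nat \<Rightarrow> 'a \<Rightarrow> real) \<Rightarrow> nat \<Rightarrow> 'a \<Rightarrow> real" where
  "N1 K N \<omega> = (\<Sum>i=1..N. K i \<omega>)"

definition N0 :: "(nat \<Rightarrow> 'a \<Rightarrow> real) \<Rightarrow> nat \<Rightarrow> 'a \<Rightarrow> real" where
  "N0 K N \<omega> = real N - N1 K N \<omega>"

definition sigma0_hat_sq :: "(nat \<Rightarrow> 'a \<Rightarrow> real) \<Rightarrow> (nat \<Rightarrow> 'a \<Rightarrow> real) \<Rightarrow> (nat \<Rightarrow> real) \<Rightarrow> (nat \<Rightarrow> real)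
     \<Rightarrow> nat \<Rightarrow> 'a \<Rightarrow> real" where
  "sigma0_hat_sq K p Y0 Y1 N \<omega> = (1 / max (N0 K N \<omega>) 1) *
     (\<Sum>i=1..N. (1 - K i \<omega>) * (Yobs K Y0 Y1 i \<omega> - Yhat0 K p Y0 Y1 (i - 1) \<omega>)\<^sup>2)"

definition sigma1_hat_sq :: "(nat \<Rightarrow> 'a \<Rightarrow> real) \<Rightarrow> (nat \<Rightarrow> 'a \<Rightarrow> real) \<Rightarrow> (nat \<Rightarrow> real) \<Rightarrow> (nat \<Rightarrow> real)
     \<Rightarrow> nat \<Rightarrow> 'a \<Rightarrow> real" where
  "sigma1_hat_sq K p Y0 Y1 N \<omega> = (1 / max (N1 K N \<omega>) 1) *
     (\<Sum>i=1..N. K i \<omega> * (Yobs K Y0 Y1 i \<omega> - Yhat1 K p Y0 Y1 (i - 1) \<omega>)\<^sup>2)"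

definition V_hat_strong :: "real \<Rightarrow> (nat \<Rightarrow> 'a \<Rightarrow> real) \<Rightarrow> (nat \<Rightarrow> 'a \<Rightarrow> real) \<Rightarrow> (nat \<Rightarrow> real) \<Rightarrow> (nat \<Rightarrow> real)
     \<Rightarrow> nat \<Rightarrow> 'a \<Rightarrow> real" where
  "V_hat_strong ps K p Y0 Y1 N \<omega> =
     (sqrt (sigma0_hat_sq K p Y0 Y1 N \<omega>) * sqrt (ps / (1 - ps))
      + sqrt (sigma1_hat_sq K p Y0 Y1 N \<omega>) * sqrt ((1 - ps) / ps))\<^sup>2"

definition Ybar :: "(nat \<Rightarrow> real) \<Rightarrow> nat \<Rightarrow> real" where
  "Ybar Y N = (1 / real N) * (\<Sum>i=1..N. Y i)"

definition Svar :: "(nat \<Rightarrow> real) \<Rightarrow> nat \<Rightarrow> real" where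
  "Svar Y N = (1 / real N) * (\<Sum>i=1..N. (Y i - Ybar Y N)\<^sup>2)"

definition Scov :: "(nat \<Rightarrow> real) \<Rightarrow> (nat \<Rightarrow> real) \<Rightarrow> nat \<Rightarrow> real" where
  "Scov Y0 Y1 N = (1 / real N) * (\<Sum>i=1..N. (Y0 i - Ybar Y0 N) * (Y1 i - Ybar Y1 N))"

end

(*
  Each arm is handled uniformly.  Let w_i be the indicator of the arm (K_i or 1 - K_i) and
  q_i its assignment probability (p_i or 1 - p_i); then w_i - q_i = +-(K_i - p_i) is a bounded
  martingale difference for the filtration F_{i-1}.  Averages (1/N) sum_i (K_i - p_i) a_i with
  bounded predictable a_i have second moment at most C^2/N, so they vanish in mean.  This makes
  the running IPW means hat Y_{i-1} consistent in mean, and, writing w_i = q_i +- (K_i - p_i) and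
  using q_i -> q* in probability, it gives (1/N) sum_i w_i (Y_i - hat Y_{i-1})^2 -> q* sigma^2
  and N_arm/N -> q*; their ratio is hat sigma^2.  The limit of hat V follows by continuity, and
  it dominates V by the Cauchy-Schwarz inequality sigma_01 <= sigma_0 sigma_1 for the
  finite-population moments, with equality when the centred outcomes are proportional.
*)
theory Submission
  imports Defs
begin

section \<open>Convergence in probability and in mean\<close>

lemma (in finite_measure) integrable_if_abs_le:
  fixes f :: "'a \<Rightarrow> real"
  assumes "f \<in> borel_measurable M" and "\<And>x. x \<in> space M \<Longrightarrow> \<bar>f x\<bar> \<le> B"
  shows "integrable M f"
  using assms by (intro integrable_const_bound[where B = B] AE_I2) auto

lemma abs_power2_le_if_abs_le: "\<bar>x :: real\<bar> \<le> b \<Longrightarrow> \<bar>x\<^sup>2\<bar> \<le> b\<^sup>2"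
  using power_mono[of "\<bar>x\<bar>" b 2] by simp

lemma (in prob_space) integral_abs_le_sqrt_integral_square:
  fixes X :: "'a \<Rightarrow> real"
  assumes "X \<in> borel_measurable M" and "integrable M (\<lambda>x. (X x)\<^sup>2)"
  shows "(\<integral>x. \<bar>X x\<bar> \<partial>M) \<le> sqrt (\<integral>x. (X x)\<^sup>2 \<partial>M)"
proof -
  have int: "integrable M (\<lambda>x. \<bar>X x\<bar>)"
    using assms by (intro integrable_abs) (rule square_integrable_imp_integrable)
  have "variance (\<lambda>x. \<bar>X x\<bar>) = (\<integral>x. (X x)\<^sup>2 \<partial>M) - (\<integral>x. \<bar>X x\<bar> \<partial>M)\<^sup>2"
    using variance_eq[of "\<lambda>x. \<bar>X x\<bar>"] int assms(2) by simp
  then have "(\<integral>x. \<bar>X x\<bar> \<partial>M)\<^sup>2 \<le> (\<integral>x. (X x)\<^sup>2 \<partial>M)"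
    using variance_positive[of "\<lambda>x. \<bar>X x\<bar>"] by linarith
  then show ?thesis
    by (rule real_le_rsqrt)
qed

lemma cesaro_mean_tendsto_zero:
  fixes a :: "nat \<Rightarrow> real"
  assumes "a \<longlonglongrightarrow> 0"
  shows "(\<lambda>N. (1 / real N) * (\<Sum>i=1..N. a i)) \<longlonglongrightarrow> 0"
proof (rule LIMSEQ_I)
  fix r :: real assume r: "r > 0"
  obtain m where m: "\<And>n. n \<ge> m \<Longrightarrow> \<bar>a n\<bar> < r / 2"
    using LIMSEQ_D[OF assms, of "r / 2"] r by auto
  define C where "C = (\<Sum>i=1..m. \<bar>a i\<bar>)"
  obtain N0 :: nat where N0: "2 * C / r < real N0"
    using reals_Archimedean2 by blast
  have "\<bar>(1 / real n) * (\<Sum>i=1..n. a i)\<bar> < r" if n: "n \<ge> max (Suc m) N0" for n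
  proof -
    have "{1..n} = {1..m} \<union> {Suc m..n}" using n by auto
    then have "(\<Sum>i=1..n. \<bar>a i\<bar>) = C + (\<Sum>i=Suc m..n. \<bar>a i\<bar>)"
      unfolding C_def by (simp add: sum.union_disjoint)
    also have "(\<Sum>i=Suc m..n. \<bar>a i\<bar>) \<le> (\<Sum>i=Suc m..n. r / 2)"
      using m by (intro sum_mono) (simp add: less_imp_le)
    also have "\<dots> \<le> real n * (r / 2)"
      using r by (simp add: mult_right_mono)
    finally have "\<bar>\<Sum>i=1..n. a i\<bar> \<le> C + real n * (r / 2)"
      using sum_abs[of a "{1..n}"] by linarith
    moreover have "2 * C / r < real n"
      using N0 n by linarith
    then have "2 * C < real n * r"
      using r by (simp add: divide_less_eq)
    ultimately have "\<bar>\<Sum>i=1..n. a i\<bar> < real n * r"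
      by linarith
    then show ?thesis
      using n by (simp add: abs_mult divide_less_eq mult.commute)
  qed
  then have "\<forall>n\<ge>max (Suc m) N0. norm ((1 / real n) * (\<Sum>i=1..n. a i) - 0) < r"
    by simp
  then show "\<exists>n0. \<forall>n\<ge>n0. norm ((1 / real n) * (\<Sum>i=1..n. a i) - 0) < r"
    by (rule exI)
qed

lemma conv_in_prob_cong:
  assumes "\<And>n \<omega>. \<omega> \<in> space M \<Longrightarrow> X n \<omega> = X' n \<omega>"
  shows "conv_in_prob M X c \<longleftrightarrow> conv_in_prob M X' c"
proof -
  have "{\<omega> \<in> space M. e < \<bar>X n \<omega> - c\<bar>} = {\<omega> \<in> space M. e < \<bar>X' n \<omega> - c\<bar>}" for e n
    using assms by auto
  then show ?thesis
    unfolding conv_in_prob_def by simp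
qed

context prob_space
begin

lemma conv_in_prob_if_integral_bound:
  assumes Z: "\<And>n. integrable M (Z n)"
    and le: "\<forall>\<^sub>F n in sequentially. \<forall>\<omega>\<in>space M. \<bar>X n \<omega> - c\<bar> \<le> Z n \<omega>"
    and lim: "(\<lambda>n. \<integral>\<omega>. Z n \<omega> \<partial>M) \<longlonglongrightarrow> 0"
  shows "conv_in_prob M X c"
  unfolding conv_in_prob_def
proof (intro allI impI)
  fix e :: real assume e: "e > 0"
  have markov_lim: "(\<lambda>n. (\<integral>\<omega>. Z n \<omega> \<partial>M) / e) \<longlonglongrightarrow> 0"
    using tendsto_divide_zero[OF lim] by simp
  have markov: "\<forall>\<^sub>F n in sequentially.
      measure M {\<omega> \<in> space M. e < \<bar>X n \<omega> - c\<bar>} \<le> (\<integral>\<omega>. Z n \<omega> \<partial>M) / e"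
    using le
  proof eventually_elim
    case (elim n)
    have "measure M {\<omega> \<in> space M. e < \<bar>X n \<omega> - c\<bar>} \<le> measure M {\<omega> \<in> space M. e \<le> Z n \<omega>}"
      using elim borel_measurable_integrable[OF Z] by (intro finite_measure_mono) (force, measurable)
    also have "\<dots> \<le> (\<integral>\<omega>. Z n \<omega> \<partial>M) / e"
    proof (rule integral_Markov_inequality_measure[OF Z sets.top])
      show "AE \<omega> in M. 0 \<le> Z n \<omega>"
        using elim by (intro AE_I2) (meson abs_ge_zero order_trans)
    qed (use e in auto)
    finally show ?case .
  qed
  show "(\<lambda>n. measure M {\<omega> \<in> space M. e < \<bar>X n \<omega> - c\<bar>}) \<longlonglongrightarrow> 0"
    by (rule tendsto_sandwich[OF _ markov tendsto_const markov_lim]) simp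
qed

lemma conv_in_prob_perturb:
  assumes X: "conv_in_prob M X c" and X_meas: "\<And>n. X n \<in> borel_measurable M"
    and close: "\<And>n \<omega>. \<omega> \<in> space M \<Longrightarrow> \<bar>Y n \<omega> - X n \<omega>\<bar> \<le> \<epsilon> n"
    and \<epsilon>: "\<epsilon> \<longlonglongrightarrow> 0"
  shows "conv_in_prob M Y c"
  unfolding conv_in_prob_def
proof (intro allI impI)
  fix e :: real assume e: "e > 0"
  have lim: "(\<lambda>n. measure M {\<omega> \<in> space M. e / 2 < \<bar>X n \<omega> - c\<bar>}) \<longlonglongrightarrow> 0"
    using X half_gt_zero[OF e] unfolding conv_in_prob_def by blast
  have "\<forall>\<^sub>F n in sequentially. \<epsilon> n < e / 2"
    using order_tendstoD(2)[OF \<epsilon> half_gt_zero[OF e]] .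
  then have le: "\<forall>\<^sub>F n in sequentially. measure M {\<omega> \<in> space M. e < \<bar>Y n \<omega> - c\<bar>}
      \<le> measure M {\<omega> \<in> space M. e / 2 < \<bar>X n \<omega> - c\<bar>}"
  proof eventually_elim
    case (elim n)
    have "{\<omega> \<in> space M. e < \<bar>Y n \<omega> - c\<bar>} \<subseteq> {\<omega> \<in> space M. e / 2 < \<bar>X n \<omega> - c\<bar>}"
    proof safe
      fix \<omega> assume "\<omega> \<in> space M" "e < \<bar>Y n \<omega> - c\<bar>"
      then show "e / 2 < \<bar>X n \<omega> - c\<bar>"
        using close[of \<omega> n] elim by arith
    qed
    then show ?case
      using X_meas[of n] by (intro finite_measure_mono) measurable
  qed
  show "(\<lambda>n. measure M {\<omega> \<in> space M. e < \<bar>Y n \<omega> - c\<bar>}) \<longlonglongrightarrow> 0"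
    by (rule tendsto_sandwich[OF _ le tendsto_const lim]) simp
qed

lemma conv_in_prob_continuous2:
  assumes X: "conv_in_prob M X a" and Y: "conv_in_prob M Y b"
    and X_meas: "\<And>n. X n \<in> borel_measurable M" and Y_meas: "\<And>n. Y n \<in> borel_measurable M"
    and g: "isCont (\<lambda>z. g (fst z) (snd z)) (a, b)"
  shows "conv_in_prob M (\<lambda>n \<omega>. g (X n \<omega>) (Y n \<omega>)) (g a b)"
  unfolding conv_in_prob_def
proof (intro allI impI)
  fix e :: real assume e: "e > 0"
  obtain d where d: "d > 0"
    and dist_g: "\<And>z. dist z (a, b) < d \<Longrightarrow> dist (g (fst z) (snd z)) (g a b) < e"
    using g e unfolding continuous_at_eps_delta by fastforce
  define A where "A n = {\<omega> \<in> space M. d / 3 < \<bar>X n \<omega> - a\<bar>}" for n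
  define B where "B n = {\<omega> \<in> space M. d / 3 < \<bar>Y n \<omega> - b\<bar>}" for n
  have A_sets: "A n \<in> sets M" and B_sets: "B n \<in> sets M" for n
    unfolding A_def B_def using X_meas[of n] Y_meas[of n] by measurable
  have "{\<omega> \<in> space M. e < \<bar>g (X n \<omega>) (Y n \<omega>) - g a b\<bar>} \<subseteq> A n \<union> B n" for n
  proof safe
    fix \<omega> assume \<omega>: "\<omega> \<in> space M" "e < \<bar>g (X n \<omega>) (Y n \<omega>) - g a b\<bar>" "\<omega> \<notin> B n"
    have "\<not> dist (X n \<omega>, Y n \<omega>) (a, b) < d"
      using \<omega>(2) dist_g[of "(X n \<omega>, Y n \<omega>)"] by (auto simp: dist_real_def)
    moreover have "dist (X n \<omega>, Y n \<omega>) (a, b) \<le> \<bar>X n \<omega> - a\<bar> + \<bar>Y n \<omega> - b\<bar>"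
      using sqrt_sum_squares_le_sum_abs[of "X n \<omega> - a" "Y n \<omega> - b"]
      by (simp add: dist_Pair_Pair dist_real_def)
    ultimately show "\<omega> \<in> A n"
      using \<omega>(1,3) d unfolding A_def B_def by auto
  qed
  then have le: "\<forall>\<^sub>F n in sequentially.
      measure M {\<omega> \<in> space M. e < \<bar>g (X n \<omega>) (Y n \<omega>) - g a b\<bar>} \<le> measure M (A n) + measure M (B n)"
    using A_sets B_sets
    by (intro always_eventually allI order_trans[OF finite_measure_mono measure_Un_le]) auto
  have "d / 3 > 0"
    using d by simp
  then have "(\<lambda>n. measure M (A n) + measure M (B n)) \<longlonglongrightarrow> 0 + 0"
    using X Y unfolding conv_in_prob_def A_def B_def by (intro tendsto_add) blast+
  then have lim: "(\<lambda>n. measure M (A n) + measure M (B n)) \<longlonglongrightarrow> 0"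
    by simp
  show "(\<lambda>n. measure M {\<omega> \<in> space M. e < \<bar>g (X n \<omega>) (Y n \<omega>) - g a b\<bar>}) \<longlonglongrightarrow> 0"
    by (rule tendsto_sandwich[OF _ le tendsto_const lim]) simp
qed

lemma integral_abs_diff_tendsto_zero:
  assumes X: "conv_in_prob M X c" and X_meas: "\<And>n. X n \<in> borel_measurable M"
    and bounded: "\<And>n \<omega>. \<omega> \<in> space M \<Longrightarrow> \<bar>X n \<omega> - c\<bar> \<le> B"
  shows "(\<lambda>n. \<integral>\<omega>. \<bar>X n \<omega> - c\<bar> \<partial>M) \<longlonglongrightarrow> 0"
proof (rule LIMSEQ_I)
  fix r :: real assume r: "r > 0"
  have B: "B \<ge> 0"
    using bounded[of _ 0] not_empty by (metis abs_ge_zero equals0I order_trans)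
  define A where "A n = {\<omega> \<in> space M. r / 2 < \<bar>X n \<omega> - c\<bar>}" for n
  have A_sets: "A n \<in> sets M" for n
    unfolding A_def using X_meas[of n] by measurable
  have "(\<lambda>n. measure M (A n)) \<longlonglongrightarrow> 0"
    using X half_gt_zero[OF r] unfolding conv_in_prob_def A_def by blast
  then obtain n0 where n0: "\<And>n. n \<ge> n0 \<Longrightarrow> measure M (A n) < r / (2 * (B + 1))"
    using LIMSEQ_D[of _ 0 "r / (2 * (B + 1))"] r B by fastforce
  have "(\<integral>\<omega>. \<bar>X n \<omega> - c\<bar> \<partial>M) < r" if n: "n \<ge> n0" for n
  proof -
    have "\<bar>X n \<omega> - c\<bar> \<le> r / 2 + B * indicator (A n) \<omega>" if "\<omega> \<in> space M" for \<omega>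
      using bounded[OF that, of n] that B r by (cases "\<omega> \<in> A n") (auto simp: A_def)
    then have "(\<integral>\<omega>. \<bar>X n \<omega> - c\<bar> \<partial>M) \<le> (\<integral>\<omega>. r / 2 + B * indicator (A n) \<omega> \<partial>M)"
      using A_sets[of n] B r by (intro integral_mono') (auto simp: emeasure_eq_measure)
    also have "\<dots> = (\<integral>\<omega>. r / 2 \<partial>M) + (\<integral>\<omega>. B * indicator (A n) \<omega> \<partial>M)"
      using A_sets[of n] by (intro Bochner_Integration.integral_add) (auto simp: emeasure_eq_measure)
    also have "\<dots> = r / 2 + B * measure M (A n)"
      using A_sets[of n] by (simp add: prob_space)
    also have "B * measure M (A n) \<le> B * (r / (2 * (B + 1)))"
      using n0[OF n] B by (intro mult_left_mono) auto
    also have "\<dots> < r / 2"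
      using B r by (simp add: field_simps)
    finally show ?thesis by simp
  qed
  then show "\<exists>n0. \<forall>n\<ge>n0. norm ((\<integral>\<omega>. \<bar>X n \<omega> - c\<bar> \<partial>M) - 0) < r"
    by (intro exI[of _ n0]) simp
qed

lemma integral_cesaro_mean_tendsto_zero:
  assumes "\<And>i. 1 \<le> i \<Longrightarrow> integrable M (D i)" and "(\<lambda>i. \<integral>\<omega>. D i \<omega> \<partial>M) \<longlonglongrightarrow> 0"
  shows "(\<lambda>N. \<integral>\<omega>. (1 / real N) * (\<Sum>i=1..N. D i \<omega>) \<partial>M) \<longlonglongrightarrow> 0"
  using cesaro_mean_tendsto_zero[OF assms(2)] assms(1) by (simp add: integral_sum)

end

section \<open>Sequential designs and their martingale differences\<close>

lemma space_past [simp]: "space (past M K Y0 Y1 i) = space M"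
  unfolding past_def by (rule space_measure_of) auto

lemma sets_past: "sets (past M K Y0 Y1 i) = sigma_sets (space M)
     (\<Union>j\<in>{1..<i}. {K j -` B \<inter> space M | B. B \<in> sets borel}
                 \<union> {Yobs K Y0 Y1 j -` B \<inter> space M | B. B \<in> sets borel})"
  unfolding past_def by (rule sets_measure_of) auto

lemma past_mono: "j \<le> i \<Longrightarrow> subalgebra (past M K Y0 Y1 i) (past M K Y0 Y1 j)"
  unfolding subalgebra_def sets_past by (intro conjI sigma_sets_mono' UN_mono) auto

lemma measurable_past_mono:
  "j \<le> i \<Longrightarrow> f \<in> borel_measurable (past M K Y0 Y1 j) \<Longrightarrow> f \<in> borel_measurable (past M K Y0 Y1 i)"
  by (rule measurable_from_subalg[OF past_mono])

lemma K_measurable_past: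
  assumes "1 \<le> j" "j < i"
  shows "K j \<in> borel_measurable (past M K Y0 Y1 i)"
proof -
  have "j \<in> {1..<i}"
    using assms by simp
  then have "K j -` B \<inter> space M \<in> sets (past M K Y0 Y1 i)" if "B \<in> sets borel" for B
    using that unfolding sets_past by (blast intro: sigma_sets.Basic)
  then show ?thesis
    by (auto intro: measurableI)
qed

lemma
  assumes "sequential_design M K Y0 Y1 p" "1 \<le> i"
  shows sequential_design_K_measurable: "K i \<in> borel_measurable M"
    and sequential_design_K_01: "\<omega> \<in> space M \<Longrightarrow> K i \<omega> = 0 \<or> K i \<omega> = 1"
    and sequential_design_p_measurable: "p i \<in> borel_measurable (past M K Y0 Y1 i)"
    and sequential_design_cond_prob: "A \<in> sets (past M K Y0 Y1 i) \<Longrightarrow>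
          measure M ({\<omega> \<in> space M. K i \<omega> = 1} \<inter> A) = (\<integral>\<omega>. indicator A \<omega> * p i \<omega> \<partial>M)"
  using assms unfolding sequential_design_def by auto

lemma subalgebra_past:
  assumes design: "sequential_design M K Y0 Y1 p"
  shows "subalgebra M (past M K Y0 Y1 i)"
proof -
  have "Yobs K Y0 Y1 j \<in> borel_measurable M" if "1 \<le> j" for j
    using sequential_design_K_measurable[OF design that] unfolding Yobs_def[abs_def] by measurable
  then show ?thesis
    using sequential_design_K_measurable[OF design]
    unfolding subalgebra_def sets_past
    by (intro conjI sets.sigma_sets_subset) (auto simp: measurable_sets)
qed

lemma measurable_past_imp_measurable:
  "sequential_design M K Y0 Y1 p \<Longrightarrow> f \<in> borel_measurable (past M K Y0 Y1 i) \<Longrightarrow> f \<in> borel_measurable M"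
  by (rule measurable_from_subalg[OF subalgebra_past])

lemma martingale_sum_measurable_past:
  assumes design: "sequential_design M K Y0 Y1 p"
    and a: "\<And>i. 1 \<le> i \<Longrightarrow> a i \<in> borel_measurable (past M K Y0 Y1 i)"
    and "n < m"
  shows "(\<lambda>\<omega>. \<Sum>i=1..n. (K i \<omega> - p i \<omega>) * a i \<omega>) \<in> borel_measurable (past M K Y0 Y1 m)"
proof (rule borel_measurable_sum)
  fix i assume "i \<in> {1..n}"
  then have i: "1 \<le> i" "i < m"
    using assms by auto
  have "K i \<in> borel_measurable (past M K Y0 Y1 m)"
    using i by (rule K_measurable_past)
  moreover have "p i \<in> borel_measurable (past M K Y0 Y1 m)"
    using i by (intro measurable_past_mono[OF _ sequential_design_p_measurable[OF design]]) auto
  moreover have "a i \<in> borel_measurable (past M K Y0 Y1 m)"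
    using i by (intro measurable_past_mono[OF _ a]) auto
  ultimately show "(\<lambda>\<omega>. (K i \<omega> - p i \<omega>) * a i \<omega>) \<in> borel_measurable (past M K Y0 Y1 m)"
    by measurable
qed

lemma martingale_sum_measurable:
  assumes design: "sequential_design M K Y0 Y1 p"
    and a: "\<And>i. 1 \<le> i \<Longrightarrow> a i \<in> borel_measurable (past M K Y0 Y1 i)"
  shows "(\<lambda>\<omega>. \<Sum>i=1..n. (K i \<omega> - p i \<omega>) * a i \<omega>) \<in> borel_measurable M"
  using design martingale_sum_measurable_past[OF design a lessI] by (rule measurable_past_imp_measurable)

lemma abs_martingale_increment_le:
  assumes design: "sequential_design M K Y0 Y1 p"
    and p: "\<And>i \<omega>. 1 \<le> i \<Longrightarrow> \<omega> \<in> space M \<Longrightarrow> 0 \<le> p i \<omega> \<and> p i \<omega> \<le> 1"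
    and a_bounded: "\<And>i \<omega>. 1 \<le> i \<Longrightarrow> \<omega> \<in> space M \<Longrightarrow> \<bar>a i \<omega>\<bar> \<le> C"
    and i: "1 \<le> i" and \<omega>: "\<omega> \<in> space M"
  shows "\<bar>(K i \<omega> - p i \<omega>) * a i \<omega>\<bar> \<le> C"
proof -
  have "\<bar>K i \<omega> - p i \<omega>\<bar> \<le> 1"
    using sequential_design_K_01[OF design i \<omega>] p[OF i \<omega>] by auto
  then show ?thesis
    unfolding abs_mult using a_bounded[OF i \<omega>] mult_mono[of _ 1 _ C] by fastforce
qed

lemma abs_martingale_sum_le:
  assumes design: "sequential_design M K Y0 Y1 p"
    and p: "\<And>i \<omega>. 1 \<le> i \<Longrightarrow> \<omega> \<in> space M \<Longrightarrow> 0 \<le> p i \<omega> \<and> p i \<omega> \<le> 1"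
    and a_bounded: "\<And>i \<omega>. 1 \<le> i \<Longrightarrow> \<omega> \<in> space M \<Longrightarrow> \<bar>a i \<omega>\<bar> \<le> C"
    and \<omega>: "\<omega> \<in> space M"
  shows "\<bar>\<Sum>i=1..n. (K i \<omega> - p i \<omega>) * a i \<omega>\<bar> \<le> real n * C"
proof -
  have "\<bar>\<Sum>i=1..n. (K i \<omega> - p i \<omega>) * a i \<omega>\<bar> \<le> (\<Sum>i=1..n. \<bar>(K i \<omega> - p i \<omega>) * a i \<omega>\<bar>)"
    by (rule sum_abs)
  also have "\<dots> \<le> (\<Sum>i=1..n. C)"
    using abs_martingale_increment_le[OF design p a_bounded _ \<omega>] by (intro sum_mono) auto
  finally show ?thesis
    by simp
qed

context prob_space
begin

lemma sequential_design_cond_exp: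
  assumes design: "sequential_design M K Y0 Y1 p" and i: "1 \<le> i"
    and p: "\<And>\<omega>. \<omega> \<in> space M \<Longrightarrow> 0 \<le> p i \<omega> \<and> p i \<omega> \<le> 1"
  shows "AE \<omega> in M. real_cond_exp M (past M K Y0 Y1 i) (K i) \<omega> = p i \<omega>"
proof (rule sigma_finite_subalgebra.real_cond_exp_charact)
  let ?F = "past M K Y0 Y1 i"
  have sub: "subalgebra M ?F"
    using design by (rule subalgebra_past)
  then show "sigma_finite_subalgebra M ?F"
    by (intro finite_measure_subalgebra_is_sigma_finite)
      (simp add: finite_measure_subalgebra_def finite_measure_subalgebra_axioms_def finite_measure_axioms)
  have K01: "\<And>\<omega>. \<omega> \<in> space M \<Longrightarrow> K i \<omega> = 0 \<or> K i \<omega> = 1"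
    using sequential_design_K_01[OF design i] .
  have [measurable]: "K i \<in> borel_measurable M"
    using sequential_design_K_measurable[OF design i] .
  show p_F: "p i \<in> borel_measurable ?F"
    using sequential_design_p_measurable[OF design i] .
  have "\<bar>K i \<omega>\<bar> \<le> 1" if "\<omega> \<in> space M" for \<omega>
    using K01[OF that] by auto
  then show "integrable M (K i)"
    by (intro integrable_if_abs_le[where B = 1]) auto
  show "integrable M (p i)"
    using measurable_past_imp_measurable[OF design p_F] p by (intro integrable_if_abs_le[where B = 1]) auto
  fix A assume A: "A \<in> sets ?F"
  then have "A \<in> sets M"
    using sub unfolding subalgebra_def by blast
  then have "{\<omega> \<in> space M. K i \<omega> = 1} \<inter> A \<in> sets M"
    by measurable
  moreover have "(\<integral>\<omega>\<in>A. K i \<omega> \<partial>M) = (\<integral>\<omega>. indicator ({\<omega> \<in> space M. K i \<omega> = 1} \<inter> A) \<omega> \<partial>M)"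
    unfolding set_lebesgue_integral_def
    by (intro Bochner_Integration.integral_cong) (auto simp: indicator_def dest: K01)
  ultimately have "(\<integral>\<omega>\<in>A. K i \<omega> \<partial>M) = measure M ({\<omega> \<in> space M. K i \<omega> = 1} \<inter> A)"
    by simp
  also have "\<dots> = (\<integral>\<omega>\<in>A. p i \<omega> \<partial>M)"
    using sequential_design_cond_prob[OF design i A] unfolding set_lebesgue_integral_def by simp
  finally show "(\<integral>\<omega>\<in>A. K i \<omega> \<partial>M) = (\<integral>\<omega>\<in>A. p i \<omega> \<partial>M)" .
qed

lemma sequential_design_orthogonal:
  assumes design: "sequential_design M K Y0 Y1 p" and i: "1 \<le> i"
    and p: "\<And>\<omega>. \<omega> \<in> space M \<Longrightarrow> 0 \<le> p i \<omega> \<and> p i \<omega> \<le> 1"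
    and h: "h \<in> borel_measurable (past M K Y0 Y1 i)"
    and h_bounded: "\<And>\<omega>. \<omega> \<in> space M \<Longrightarrow> \<bar>h \<omega>\<bar> \<le> B"
  shows "(\<integral>\<omega>. (K i \<omega> - p i \<omega>) * h \<omega> \<partial>M) = 0"
proof -
  interpret sigma_finite_subalgebra M "past M K Y0 Y1 i"
    using subalgebra_past[OF design]
    by (intro finite_measure_subalgebra_is_sigma_finite)
      (simp add: finite_measure_subalgebra_def finite_measure_subalgebra_axioms_def finite_measure_axioms)
  have [measurable]: "K i \<in> borel_measurable M" "p i \<in> borel_measurable M" "h \<in> borel_measurable M"
    using sequential_design_K_measurable[OF design i] sequential_design_p_measurable[OF design i] h
      measurable_past_imp_measurable[OF design] by auto
  have "\<bar>h \<omega> * K i \<omega>\<bar> \<le> B" "\<bar>h \<omega> * p i \<omega>\<bar> \<le> B" if "\<omega> \<in> space M" for \<omega>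
    using h_bounded[OF that] sequential_design_K_01[OF design i that] p[OF that]
      mult_right_le_one_le[of "\<bar>h \<omega>\<bar>" "p i \<omega>"]
    by (auto simp: abs_mult)
  then have int_hK: "integrable M (\<lambda>\<omega>. h \<omega> * K i \<omega>)" and int_hp: "integrable M (\<lambda>\<omega>. h \<omega> * p i \<omega>)"
    by (auto intro!: integrable_if_abs_le[where B = B])
  have "(\<integral>\<omega>. h \<omega> * K i \<omega> \<partial>M) = (\<integral>\<omega>. h \<omega> * p i \<omega> \<partial>M)"
    using real_cond_exp_intg(2)[OF int_hK h, symmetric] sequential_design_cond_exp[OF design i p]
    by (auto intro!: integral_cong_AE)
  moreover have "(\<integral>\<omega>. (K i \<omega> - p i \<omega>) * h \<omega> \<partial>M)
      = (\<integral>\<omega>. h \<omega> * K i \<omega> \<partial>M) - (\<integral>\<omega>. h \<omega> * p i \<omega> \<partial>M)"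
    unfolding Bochner_Integration.integral_diff[OF int_hK int_hp, symmetric]
    by (simp add: algebra_simps)
  ultimately show ?thesis
    by simp
qed

lemma integrable_martingale_mean:
  assumes design: "sequential_design M K Y0 Y1 p"
    and p: "\<And>i \<omega>. 1 \<le> i \<Longrightarrow> \<omega> \<in> space M \<Longrightarrow> 0 \<le> p i \<omega> \<and> p i \<omega> \<le> 1"
    and a: "\<And>i. 1 \<le> i \<Longrightarrow> a i \<in> borel_measurable (past M K Y0 Y1 i)"
    and a_bounded: "\<And>i \<omega>. 1 \<le> i \<Longrightarrow> \<omega> \<in> space M \<Longrightarrow> \<bar>a i \<omega>\<bar> \<le> C"
  shows "integrable M (\<lambda>\<omega>. (1 / real n) * (\<Sum>i=1..n. (K i \<omega> - p i \<omega>) * a i \<omega>))"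
proof (intro integrable_mult_right integrable_if_abs_le)
  show "(\<lambda>\<omega>. \<Sum>i=1..n. (K i \<omega> - p i \<omega>) * a i \<omega>) \<in> borel_measurable M"
    by (rule martingale_sum_measurable[OF design a])
  show "\<bar>\<Sum>i=1..n. (K i \<omega> - p i \<omega>) * a i \<omega>\<bar> \<le> real n * C" if "\<omega> \<in> space M" for \<omega>
    by (rule abs_martingale_sum_le[OF design p a_bounded that])
qed

lemma integral_martingale_sum_square_Suc:
  assumes design: "sequential_design M K Y0 Y1 p"
    and p: "\<And>i \<omega>. 1 \<le> i \<Longrightarrow> \<omega> \<in> space M \<Longrightarrow> 0 \<le> p i \<omega> \<and> p i \<omega> \<le> 1"
    and a: "\<And>i. 1 \<le> i \<Longrightarrow> a i \<in> borel_measurable (past M K Y0 Y1 i)"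
    and a_bounded: "\<And>i \<omega>. 1 \<le> i \<Longrightarrow> \<omega> \<in> space M \<Longrightarrow> \<bar>a i \<omega>\<bar> \<le> C"
  defines "S n \<omega> \<equiv> \<Sum>i=1..n. (K i \<omega> - p i \<omega>) * a i \<omega>"
  shows "(\<integral>\<omega>. (S (Suc n) \<omega>)\<^sup>2 \<partial>M)
    = (\<integral>\<omega>. (S n \<omega>)\<^sup>2 \<partial>M) + (\<integral>\<omega>. ((K (Suc n) \<omega> - p (Suc n) \<omega>) * a (Suc n) \<omega>)\<^sup>2 \<partial>M)"
proof -
  define d where "d \<omega> = (K (Suc n) \<omega> - p (Suc n) \<omega>) * a (Suc n) \<omega>" for \<omega>
  have S_past: "S n \<in> borel_measurable (past M K Y0 Y1 (Suc n))"
    unfolding S_def by (rule martingale_sum_measurable_past[OF design a lessI])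
  have [measurable]: "K (Suc n) \<in> borel_measurable M"
    using sequential_design_K_measurable[OF design] by simp
  have [measurable]: "p (Suc n) \<in> borel_measurable M" "a (Suc n) \<in> borel_measurable M"
    using sequential_design_p_measurable[OF design, of "Suc n"] a[of "Suc n"]
    by (auto intro: measurable_past_imp_measurable[OF design])
  have [measurable]: "S n \<in> borel_measurable M"
    using design S_past by (rule measurable_past_imp_measurable)
  have [measurable]: "d \<in> borel_measurable M"
    unfolding d_def[abs_def] by measurable
  have S_bounded: "\<bar>S n \<omega>\<bar> \<le> real n * C" and d_bounded: "\<bar>d \<omega>\<bar> \<le> C" if "\<omega> \<in> space M" for \<omega>
    using abs_martingale_sum_le[OF design p a_bounded that, where n = n]
      abs_martingale_increment_le[OF design p a_bounded _ that, where i = "Suc n"]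
    by (auto simp: S_def d_def)
  have "\<bar>a (Suc n) \<omega> * S n \<omega>\<bar> \<le> C * (real n * C)" if "\<omega> \<in> space M" for \<omega>
    unfolding abs_mult using a_bounded[of "Suc n" \<omega>] S_bounded[OF that] that
    by (intro mult_mono) auto
  then have "(\<integral>\<omega>. (K (Suc n) \<omega> - p (Suc n) \<omega>) * (a (Suc n) \<omega> * S n \<omega>) \<partial>M) = 0"
    using p a[of "Suc n"] S_past by (intro sequential_design_orthogonal[OF design]) auto
  then have cross: "(\<integral>\<omega>. d \<omega> * S n \<omega> \<partial>M) = 0"
    by (simp add: d_def mult.assoc)
  have "integrable M (\<lambda>\<omega>. (S n \<omega>)\<^sup>2)"
    using S_bounded
    by (intro integrable_if_abs_le[where B = "(real n * C)\<^sup>2"] abs_power2_le_if_abs_le) auto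
  moreover have "integrable M (\<lambda>\<omega>. (d \<omega>)\<^sup>2)"
    using d_bounded by (intro integrable_if_abs_le[where B = "C\<^sup>2"] abs_power2_le_if_abs_le) auto
  moreover have "\<bar>d \<omega> * S n \<omega>\<bar> \<le> C * (real n * C)" if "\<omega> \<in> space M" for \<omega>
    unfolding abs_mult using d_bounded[OF that] S_bounded[OF that] by (intro mult_mono) auto
  then have "integrable M (\<lambda>\<omega>. d \<omega> * S n \<omega>)"
    by (intro integrable_if_abs_le) auto
  ultimately have "(\<integral>\<omega>. (S n \<omega>)\<^sup>2 + 2 * (d \<omega> * S n \<omega>) + (d \<omega>)\<^sup>2 \<partial>M)
      = (\<integral>\<omega>. (S n \<omega>)\<^sup>2 \<partial>M) + 2 * (\<integral>\<omega>. d \<omega> * S n \<omega> \<partial>M) + (\<integral>\<omega>. (d \<omega>)\<^sup>2 \<partial>M)"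
    by simp
  moreover have "(S (Suc n) \<omega>)\<^sup>2 = (S n \<omega>)\<^sup>2 + 2 * (d \<omega> * S n \<omega>) + (d \<omega>)\<^sup>2" for \<omega>
    by (simp add: S_def d_def power2_sum)
  ultimately show ?thesis
    using cross by (simp add: d_def)
qed

lemma integral_martingale_sum_square_le:
  assumes design: "sequential_design M K Y0 Y1 p"
    and p: "\<And>i \<omega>. 1 \<le> i \<Longrightarrow> \<omega> \<in> space M \<Longrightarrow> 0 \<le> p i \<omega> \<and> p i \<omega> \<le> 1"
    and a: "\<And>i. 1 \<le> i \<Longrightarrow> a i \<in> borel_measurable (past M K Y0 Y1 i)"
    and a_bounded: "\<And>i \<omega>. 1 \<le> i \<Longrightarrow> \<omega> \<in> space M \<Longrightarrow> \<bar>a i \<omega>\<bar> \<le> C"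
  shows "(\<integral>\<omega>. (\<Sum>i=1..n. (K i \<omega> - p i \<omega>) * a i \<omega>)\<^sup>2 \<partial>M) \<le> real n * C\<^sup>2"
proof (induction n)
  case (Suc n)
  have "(\<integral>\<omega>. ((K (Suc n) \<omega> - p (Suc n) \<omega>) * a (Suc n) \<omega>)\<^sup>2 \<partial>M) \<le> (\<integral>\<omega>. C\<^sup>2 \<partial>M)"
    using abs_martingale_increment_le[OF design p a_bounded, where i = "Suc n"]
    by (intro integral_mono') (auto intro!: abs_power2_le_if_abs_le[THEN order_trans[OF abs_ge_self]])
  then show ?case
    using Suc.IH integral_martingale_sum_square_Suc[OF design p a a_bounded, of n]
    by (simp add: prob_space algebra_simps)
qed simp

lemma integral_abs_martingale_mean_tendsto_zero:
  assumes design: "sequential_design M K Y0 Y1 p"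
    and p: "\<And>i \<omega>. 1 \<le> i \<Longrightarrow> \<omega> \<in> space M \<Longrightarrow> 0 \<le> p i \<omega> \<and> p i \<omega> \<le> 1"
    and a: "\<And>i. 1 \<le> i \<Longrightarrow> a i \<in> borel_measurable (past M K Y0 Y1 i)"
    and a_bounded: "\<And>i \<omega>. 1 \<le> i \<Longrightarrow> \<omega> \<in> space M \<Longrightarrow> \<bar>a i \<omega>\<bar> \<le> C"
  shows "(\<lambda>n. \<integral>\<omega>. \<bar>(1 / real n) * (\<Sum>i=1..n. (K i \<omega> - p i \<omega>) * a i \<omega>)\<bar> \<partial>M) \<longlonglongrightarrow> 0"
proof (rule tendsto_sandwich[OF _ _ tendsto_const])
  show "(\<lambda>n. sqrt (C\<^sup>2 / real n)) \<longlonglongrightarrow> 0"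
    using tendsto_real_sqrt[OF lim_const_over_n[of "C\<^sup>2"]] by simp
  show "\<forall>\<^sub>F n in sequentially. (\<integral>\<omega>. \<bar>(1 / real n) * (\<Sum>i=1..n. (K i \<omega> - p i \<omega>) * a i \<omega>)\<bar> \<partial>M)
      \<le> sqrt (C\<^sup>2 / real n)"
  proof (rule eventually_sequentiallyI[of 1])
    fix n :: nat assume n: "1 \<le> n"
    define S where "S \<omega> = (\<Sum>i=1..n. (K i \<omega> - p i \<omega>) * a i \<omega>)" for \<omega>
    have [measurable]: "S \<in> borel_measurable M"
      unfolding S_def[abs_def] by (rule martingale_sum_measurable[OF design a])
    have "\<bar>S \<omega>\<bar> \<le> real n * C" if "\<omega> \<in> space M" for \<omega>
      unfolding S_def by (rule abs_martingale_sum_le[OF design p a_bounded that])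
    then have "integrable M (\<lambda>\<omega>. (S \<omega>)\<^sup>2)"
      by (intro integrable_if_abs_le[where B = "(real n * C)\<^sup>2"] abs_power2_le_if_abs_le) auto
    then have "(\<integral>\<omega>. \<bar>S \<omega> / real n\<bar> \<partial>M) \<le> sqrt (\<integral>\<omega>. (S \<omega> / real n)\<^sup>2 \<partial>M)"
      by (intro integral_abs_le_sqrt_integral_square) (auto simp: power_divide)
    also have "(\<integral>\<omega>. (S \<omega> / real n)\<^sup>2 \<partial>M) = (\<integral>\<omega>. (S \<omega>)\<^sup>2 \<partial>M) / (real n)\<^sup>2"
      by (simp add: power_divide)
    also have "\<dots> \<le> real n * C\<^sup>2 / (real n)\<^sup>2"
      unfolding S_def using integral_martingale_sum_square_le[OF design p a a_bounded]
      by (intro divide_right_mono) auto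
    also have "real n * C\<^sup>2 / (real n)\<^sup>2 = C\<^sup>2 / real n"
      using n by (simp add: power2_eq_square)
    finally show "(\<integral>\<omega>. \<bar>(1 / real n) * (\<Sum>i=1..n. (K i \<omega> - p i \<omega>) * a i \<omega>)\<bar> \<partial>M)
        \<le> sqrt (C\<^sup>2 / real n)"
      by (simp add: S_def)
  qed
qed simp

end

section \<open>Finite-population moments\<close>

lemma Svar_nonneg: "0 \<le> Svar Y N"
  unfolding Svar_def by (simp add: sum_nonneg)

lemma mean_square_about_eq:
  assumes "1 \<le> N"
  shows "(1 / real N) * (\<Sum>i=1..N. (y i - c)\<^sup>2) = Svar y N + (Ybar y N - c)\<^sup>2"
proof -
  let ?m = "Ybar y N"
  have sum_y: "(\<Sum>i=1..N. y i) = real N * ?m"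
    using assms unfolding Ybar_def by simp
  have "(\<Sum>i=1..N. (y i - c)\<^sup>2) = (\<Sum>i=1..N. (y i - ?m)\<^sup>2 + 2 * (?m - c) * y i + (c\<^sup>2 - ?m\<^sup>2))"
    by (intro sum.cong) (simp_all add: power2_eq_square algebra_simps)
  also have "\<dots> = (\<Sum>i=1..N. (y i - ?m)\<^sup>2) + 2 * (?m - c) * (\<Sum>i=1..N. y i) + real N * (c\<^sup>2 - ?m\<^sup>2)"
    by (simp add: sum.distrib sum_distrib_left)
  also have "\<dots> = (\<Sum>i=1..N. (y i - ?m)\<^sup>2) + real N * (?m - c)\<^sup>2"
    unfolding sum_y by (simp add: power2_eq_square algebra_simps)
  finally show ?thesis
    using assms unfolding Svar_def by (simp add: field_simps)
qed

lemma mean_square_about_limit_tendsto: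
  assumes "(\<lambda>N. Ybar y N) \<longlonglongrightarrow> c" and "(\<lambda>N. Svar y N) \<longlonglongrightarrow> \<sigma>2"
  shows "(\<lambda>N. (1 / real N) * (\<Sum>i=1..N. (y i - c)\<^sup>2)) \<longlonglongrightarrow> \<sigma>2"
proof -
  have "(\<lambda>N. Svar y N + (Ybar y N - c)\<^sup>2) \<longlonglongrightarrow> \<sigma>2 + (c - c)\<^sup>2"
    using assms by (intro tendsto_intros)
  then have "(\<lambda>N. Svar y N + (Ybar y N - c)\<^sup>2) \<longlonglongrightarrow> \<sigma>2"
    by simp
  then show ?thesis
    by (rule Lim_transform_eventually)
      (rule eventually_sequentiallyI[of 1], rule mean_square_about_eq[symmetric])
qed

lemma Scov_le_sqrt_Svar: "Scov Y0 Y1 N \<le> sqrt (Svar Y0 N) * sqrt (Svar Y1 N)"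
proof -
  let ?u = "\<lambda>i. Y0 i - Ybar Y0 N" and ?v = "\<lambda>i. Y1 i - Ybar Y1 N"
  have "(\<Sum>i=1..N. ?u i * ?v i)\<^sup>2 \<le> (\<Sum>i=1..N. (?u i)\<^sup>2) * (\<Sum>i=1..N. (?v i)\<^sup>2)"
    by (rule Cauchy_Schwarz_ineq_sum)
  then have "(1 / real N)\<^sup>2 * (\<Sum>i=1..N. ?u i * ?v i)\<^sup>2
      \<le> (1 / real N)\<^sup>2 * ((\<Sum>i=1..N. (?u i)\<^sup>2) * (\<Sum>i=1..N. (?v i)\<^sup>2))"
    by (rule mult_left_mono) simp
  then have "(Scov Y0 Y1 N)\<^sup>2 \<le> Svar Y0 N * Svar Y1 N"
    unfolding Scov_def Svar_def by (simp only: power_mult_distrib power2_eq_square mult_ac)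
  then have "\<bar>Scov Y0 Y1 N\<bar> \<le> sqrt (Svar Y0 N * Svar Y1 N)"
    using real_sqrt_le_mono by fastforce
  then show ?thesis
    by (simp add: real_sqrt_mult)
qed

lemma Scov_eq_sqrt_Svar_if_proportional:
  assumes "c > 0" and "\<forall>i\<in>{1..N}. Y1 i - Ybar Y1 N = c * (Y0 i - Ybar Y0 N)"
  shows "Scov Y0 Y1 N = sqrt (Svar Y0 N) * sqrt (Svar Y1 N)"
proof -
  have "(\<Sum>i=1..N. (Y1 i - Ybar Y1 N)\<^sup>2) = (\<Sum>i=1..N. c\<^sup>2 * (Y0 i - Ybar Y0 N)\<^sup>2)"
    using assms(2) by (intro sum.cong) (simp_all add: power_mult_distrib)
  then have var: "Svar Y1 N = c\<^sup>2 * Svar Y0 N"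
    unfolding Svar_def by (simp add: sum_distrib_left[symmetric] mult.left_commute)
  have "(\<Sum>i=1..N. (Y0 i - Ybar Y0 N) * (Y1 i - Ybar Y1 N)) = (\<Sum>i=1..N. c * (Y0 i - Ybar Y0 N)\<^sup>2)"
    using assms(2) by (intro sum.cong) (simp_all add: power2_eq_square)
  then have cov: "Scov Y0 Y1 N = c * Svar Y0 N"
    unfolding Scov_def Svar_def by (simp add: sum_distrib_left[symmetric] mult.left_commute)
  from var have "sqrt (Svar Y0 N) * sqrt (Svar Y1 N) = c * Svar Y0 N"
    using assms(1) Svar_nonneg[of Y0 N] by (simp add: real_sqrt_mult real_sqrt_mult_self)
  then show ?thesis
    using cov by simp
qed

lemma Svar_limit_nonneg: "(\<lambda>N. Svar Y N) \<longlonglongrightarrow> \<sigma>2 \<Longrightarrow> 0 \<le> \<sigma>2"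
  by (rule LIMSEQ_le_const) (auto simp: Svar_nonneg)

lemma Scov_limit_le:
  assumes "(\<lambda>N. Svar Y0 N) \<longlonglongrightarrow> \<sigma>0" "(\<lambda>N. Svar Y1 N) \<longlonglongrightarrow> \<sigma>1" "(\<lambda>N. Scov Y0 Y1 N) \<longlonglongrightarrow> \<sigma>01"
  shows "\<sigma>01 \<le> sqrt \<sigma>0 * sqrt \<sigma>1"
proof -
  have "(\<lambda>N. sqrt (Svar Y0 N) * sqrt (Svar Y1 N)) \<longlonglongrightarrow> sqrt \<sigma>0 * sqrt \<sigma>1"
    using assms by (intro tendsto_intros)
  then show ?thesis
    using LIMSEQ_le[OF assms(3)] Scov_le_sqrt_Svar by blast
qed

lemma Scov_limit_eq_if_proportional:
  assumes "(\<lambda>N. Svar Y0 N) \<longlonglongrightarrow> \<sigma>0" "(\<lambda>N. Svar Y1 N) \<longlonglongrightarrow> \<sigma>1" "(\<lambda>N. Scov Y0 Y1 N) \<longlonglongrightarrow> \<sigma>01"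
    and proportional: "\<forall>N\<ge>1. \<exists>c>0. \<forall>i\<in>{1..N}. Y1 i - Ybar Y1 N = c * (Y0 i - Ybar Y0 N)"
  shows "\<sigma>01 = sqrt \<sigma>0 * sqrt \<sigma>1"
proof -
  have "(\<lambda>N. sqrt (Svar Y0 N) * sqrt (Svar Y1 N)) \<longlonglongrightarrow> sqrt \<sigma>0 * sqrt \<sigma>1"
    using assms by (intro tendsto_intros)
  moreover have "\<forall>\<^sub>F N in sequentially. sqrt (Svar Y0 N) * sqrt (Svar Y1 N) = Scov Y0 Y1 N"
    using proportional Scov_eq_sqrt_Svar_if_proportional
    by (intro eventually_sequentiallyI[of 1]) (metis (no_types))
  ultimately have "(\<lambda>N. Scov Y0 Y1 N) \<longlonglongrightarrow> sqrt \<sigma>0 * sqrt \<sigma>1"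
    by (rule Lim_transform_eventually)
  then show ?thesis
    using assms(3) by (rule LIMSEQ_unique[rotated])
qed

section \<open>Inverse-probability weighting within one arm\<close>

definition ipw_mean :: "(nat \<Rightarrow> 'a \<Rightarrow> real) \<Rightarrow> (nat \<Rightarrow> 'a \<Rightarrow> real) \<Rightarrow> (nat \<Rightarrow> real) \<Rightarrow> nat \<Rightarrow> 'a \<Rightarrow> real"
  where "ipw_mean w q y n \<omega> = (if n = 0 then 0 else (1 / real n) * (\<Sum>j=1..n. w j \<omega> * y j / q j \<omega>))"

definition arm_variance_hat ::
    "(nat \<Rightarrow> 'a \<Rightarrow> real) \<Rightarrow> (nat \<Rightarrow> 'a \<Rightarrow> real) \<Rightarrow> (nat \<Rightarrow> real) \<Rightarrow> nat \<Rightarrow> 'a \<Rightarrow> real"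
  where "arm_variance_hat w q y N \<omega> = (1 / max (\<Sum>i=1..N. w i \<omega>) 1) *
     (\<Sum>i=1..N. w i \<omega> * (y i - ipw_mean w q y (i - 1) \<omega>)\<^sup>2)"

(* One arm of the experiment: w is its indicator and q its assignment probability, i.e.
   w = K, q = p, s = 1 for the treated and w = 1 - K, q = 1 - p, s = -1 for the controls. *)
locale ipw_arm = prob_space M
  for M :: "'a measure" and K p :: "nat \<Rightarrow> 'a \<Rightarrow> real" and Y0 Y1 :: "nat \<Rightarrow> real"
    and w q :: "nat \<Rightarrow> 'a \<Rightarrow> real" and s :: real and y :: "nat \<Rightarrow> real"
    and \<delta> Mb c \<sigma>2 q_lim :: real +
  assumes design: "sequential_design M K Y0 Y1 p"
    and p_bounds: "\<And>i \<omega>. 1 \<le> i \<Longrightarrow> \<omega> \<in> space M \<Longrightarrow> 0 \<le> p i \<omega> \<and> p i \<omega> \<le> 1"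
    and w_q: "\<And>i \<omega>. 1 \<le> i \<Longrightarrow> \<omega> \<in> space M \<Longrightarrow> w i \<omega> = q i \<omega> + s * (K i \<omega> - p i \<omega>)"
    and w_01: "\<And>i \<omega>. 1 \<le> i \<Longrightarrow> \<omega> \<in> space M \<Longrightarrow> w i \<omega> = 0 \<or> w i \<omega> = 1"
    and q_past: "\<And>i. 1 \<le> i \<Longrightarrow> q i \<in> borel_measurable (past M K Y0 Y1 i)"
    and q_bounds: "\<And>i \<omega>. 1 \<le> i \<Longrightarrow> \<omega> \<in> space M \<Longrightarrow> \<delta> \<le> q i \<omega> \<and> q i \<omega> \<le> 1"
    and \<delta>: "0 < \<delta>"
    and y_bounded: "\<And>i. 1 \<le> i \<Longrightarrow> \<bar>y i\<bar> \<le> Mb"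
    and y_mean: "(\<lambda>N. Ybar y N) \<longlonglongrightarrow> c"
    and y_var: "(\<lambda>N. Svar y N) \<longlonglongrightarrow> \<sigma>2"
    and q_conv: "conv_in_prob M q q_lim"
    and q_lim: "0 < q_lim"
begin

lemma Mb_nonneg: "0 \<le> Mb"
  using y_bounded[of 1] by linarith

lemma q_measurable: "1 \<le> i \<Longrightarrow> q i \<in> borel_measurable M"
  using q_past by (rule measurable_past_imp_measurable[OF design])

lemma w_measurable: "1 \<le> i \<Longrightarrow> w i \<in> borel_measurable M"
proof -
  assume i: "1 \<le> i"
  have [measurable]: "q i \<in> borel_measurable M" "K i \<in> borel_measurable M" "p i \<in> borel_measurable M"
    using q_measurable[OF i] sequential_design_K_measurable[OF design i]
      measurable_past_imp_measurable[OF design sequential_design_p_measurable[OF design i]] by auto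
  have "(\<lambda>\<omega>. q i \<omega> + s * (K i \<omega> - p i \<omega>)) \<in> borel_measurable M"
    by measurable
  then show ?thesis
    using w_q[OF i] by (subst measurable_cong) auto
qed

lemma ipw_mean_measurable: "ipw_mean w q y n \<in> borel_measurable M"
proof -
  have "(\<lambda>\<omega>. w j \<omega> * y j / q j \<omega>) \<in> borel_measurable M" if "j \<in> {1..n}" for j
  proof -
    have [measurable]: "w j \<in> borel_measurable M" "q j \<in> borel_measurable M"
      using that w_measurable q_measurable by auto
    show ?thesis by measurable
  qed
  then show ?thesis
    unfolding ipw_mean_def[abs_def] by measurable
qed

lemma abs_ipw_mean_le: "\<omega> \<in> space M \<Longrightarrow> \<bar>ipw_mean w q y n \<omega>\<bar> \<le> Mb / \<delta>"
proof (cases "n = 0")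
  case True
  then show ?thesis
    using Mb_nonneg \<delta> by (simp add: ipw_mean_def)
next
  case False
  assume \<omega>: "\<omega> \<in> space M"
  have "\<bar>w j \<omega> * y j / q j \<omega>\<bar> \<le> Mb / \<delta>" if "j \<in> {1..n}" for j
  proof -
    have j: "1 \<le> j" using that by simp
    have "\<bar>w j \<omega> * y j\<bar> \<le> Mb"
      using w_01[OF j \<omega>] y_bounded[OF j] by auto
    then show ?thesis
      using q_bounds[OF j \<omega>] \<delta> Mb_nonneg by (simp add: abs_divide frac_le)
  qed
  then have "\<bar>\<Sum>j=1..n. w j \<omega> * y j / q j \<omega>\<bar> \<le> real n * (Mb / \<delta>)"
    using order_trans[OF sum_abs sum_mono[of "{1..n}" _ "\<lambda>_. Mb / \<delta>"]] by simp
  then show ?thesis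
    using False by (simp add: ipw_mean_def abs_mult field_simps)
qed

lemma integrable_abs_ipw_mean_diff: "integrable M (\<lambda>\<omega>. \<bar>ipw_mean w q y n \<omega> - c\<bar>)"
proof -
  have "\<bar>ipw_mean w q y n \<omega> - c\<bar> \<le> Mb / \<delta> + \<bar>c\<bar>" if "\<omega> \<in> space M" for \<omega>
    using abs_ipw_mean_le[OF that, of n] by linarith
  then show ?thesis
    using ipw_mean_measurable[of n] by (intro integrable_abs integrable_if_abs_le) auto
qed

lemma ipw_mean_minus_Ybar:
  assumes "1 \<le> n" and \<omega>: "\<omega> \<in> space M"
  shows "ipw_mean w q y n \<omega> - Ybar y n = (1 / real n) * (\<Sum>j=1..n. (K j \<omega> - p j \<omega>) * (s * y j / q j \<omega>))"
proof -
  have "w j \<omega> * y j / q j \<omega> - y j = (K j \<omega> - p j \<omega>) * (s * y j / q j \<omega>)" if "j \<in> {1..n}" for j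
  proof -
    have j: "1 \<le> j" using that by simp
    have "q j \<omega> \<noteq> 0" using q_bounds[OF j \<omega>] \<delta> by auto
    then show ?thesis
      unfolding w_q[OF j \<omega>] by (simp add: field_simps)
  qed
  then have "(\<Sum>j=1..n. w j \<omega> * y j / q j \<omega>) - (\<Sum>j=1..n. y j)
      = (\<Sum>j=1..n. (K j \<omega> - p j \<omega>) * (s * y j / q j \<omega>))"
    by (simp add: sum_subtractf[symmetric])
  then show ?thesis
    using assms(1) unfolding ipw_mean_def Ybar_def by (simp add: diff_divide_distrib[symmetric])
qed

lemma integral_abs_ipw_mean_tendsto: "(\<lambda>n. \<integral>\<omega>. \<bar>ipw_mean w q y n \<omega> - c\<bar> \<partial>M) \<longlonglongrightarrow> 0"
proof -
  define a where "a j \<omega> = s * y j / q j \<omega>" for j \<omega>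
  have a_past: "a j \<in> borel_measurable (past M K Y0 Y1 j)" if "1 \<le> j" for j
    using q_past[OF that] unfolding a_def[abs_def] by measurable
  have a_bounded: "\<bar>a j \<omega>\<bar> \<le> \<bar>s\<bar> * (Mb / \<delta>)" if "1 \<le> j" "\<omega> \<in> space M" for j \<omega>
    using q_bounds[OF that] y_bounded[OF that(1)] \<delta> Mb_nonneg
    by (simp add: a_def abs_mult abs_divide mult_left_mono frac_le)
  define m where "m n = (\<integral>\<omega>. \<bar>(1 / real n) * (\<Sum>j=1..n. (K j \<omega> - p j \<omega>) * a j \<omega>)\<bar> \<partial>M)" for n
  have m: "m \<longlonglongrightarrow> 0"
    unfolding m_def by (rule integral_abs_martingale_mean_tendsto_zero[OF design p_bounds a_past a_bounded])
  have "(\<lambda>n. m n + \<bar>Ybar y n - c\<bar>) \<longlonglongrightarrow> 0 + 0"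
    using m y_mean by (intro tendsto_add tendsto_rabs_zero) (simp_all add: LIM_zero)
  then have upper: "(\<lambda>n. m n + \<bar>Ybar y n - c\<bar>) \<longlonglongrightarrow> 0"
    by simp
  have le: "\<forall>\<^sub>F n in sequentially. (\<integral>\<omega>. \<bar>ipw_mean w q y n \<omega> - c\<bar> \<partial>M) \<le> m n + \<bar>Ybar y n - c\<bar>"
  proof (rule eventually_sequentiallyI[of 1])
    fix n :: nat assume n: "1 \<le> n"
    have int_m: "integrable M (\<lambda>\<omega>. \<bar>(1 / real n) * (\<Sum>j=1..n. (K j \<omega> - p j \<omega>) * a j \<omega>)\<bar>)"
      by (intro integrable_abs integrable_martingale_mean[OF design p_bounds a_past a_bounded])
    have "\<bar>ipw_mean w q y n \<omega> - c\<bar>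
        \<le> \<bar>(1 / real n) * (\<Sum>j=1..n. (K j \<omega> - p j \<omega>) * a j \<omega>)\<bar> + \<bar>Ybar y n - c\<bar>"
      if "\<omega> \<in> space M" for \<omega>
      using ipw_mean_minus_Ybar[OF n that]
        abs_triangle_ineq[of "ipw_mean w q y n \<omega> - Ybar y n" "Ybar y n - c"]
      by (simp add: a_def)
    then have "(\<integral>\<omega>. \<bar>ipw_mean w q y n \<omega> - c\<bar> \<partial>M)
        \<le> (\<integral>\<omega>. \<bar>(1 / real n) * (\<Sum>j=1..n. (K j \<omega> - p j \<omega>) * a j \<omega>)\<bar> + \<bar>Ybar y n - c\<bar> \<partial>M)"
      using int_m by (intro integral_mono') auto
    then show "(\<integral>\<omega>. \<bar>ipw_mean w q y n \<omega> - c\<bar> \<partial>M) \<le> m n + \<bar>Ybar y n - c\<bar>"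
      using int_m by (simp add: m_def prob_space)
  qed
  show ?thesis
    by (rule tendsto_sandwich[OF _ le tendsto_const upper]) simp
qed

lemma integral_abs_q_tendsto: "(\<lambda>i. \<integral>\<omega>. \<bar>q i \<omega> - q_lim\<bar> \<partial>M) \<longlonglongrightarrow> 0"
proof -
  have "conv_in_prob M (\<lambda>i. q (Suc i)) q_lim"
    using q_conv unfolding conv_in_prob_def by (auto intro: LIMSEQ_Suc)
  then have "(\<lambda>i. \<integral>\<omega>. \<bar>q (Suc i) \<omega> - q_lim\<bar> \<partial>M) \<longlonglongrightarrow> 0"
  proof (rule integral_abs_diff_tendsto_zero[where B = "1 + q_lim"])
    show "q (Suc i) \<in> borel_measurable M" for i
      using q_measurable by simp
    show "\<bar>q (Suc i) \<omega> - q_lim\<bar> \<le> 1 + q_lim" if "\<omega> \<in> space M" for i \<omega>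
      using q_bounds[of "Suc i" \<omega>] that \<delta> q_lim by auto
  qed
  then show ?thesis
    by (rule LIMSEQ_imp_Suc)
qed

lemma weighted_mean_deviation_le:
  assumes \<omega>: "\<omega> \<in> space M" and g_bounded: "\<And>i. 1 \<le> i \<Longrightarrow> \<bar>g i\<bar> \<le> B"
  shows "\<bar>(1 / real N) * (\<Sum>i=1..N. w i \<omega> * G i \<omega>) - q_lim * \<gamma>\<bar>
    \<le> (1 / real N) * (\<Sum>i=1..N. \<bar>G i \<omega> - g i\<bar> + B * \<bar>q i \<omega> - q_lim\<bar>)
      + \<bar>(1 / real N) * (\<Sum>i=1..N. (K i \<omega> - p i \<omega>) * (s * g i))\<bar>
      + q_lim * \<bar>(1 / real N) * (\<Sum>i=1..N. g i) - \<gamma>\<bar>"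
proof -
  define R where "R i = w i \<omega> * (G i \<omega> - g i) + (q i \<omega> - q_lim) * g i" for i
  have "w i \<omega> * G i \<omega> = R i + (K i \<omega> - p i \<omega>) * (s * g i) + q_lim * g i" if "i \<in> {1..N}" for i
  proof -
    have i: "1 \<le> i" using that by simp
    show ?thesis
      unfolding R_def w_q[OF i \<omega>] by (simp add: algebra_simps)
  qed
  then have "(\<Sum>i=1..N. w i \<omega> * G i \<omega>)
      = (\<Sum>i=1..N. R i) + (\<Sum>i=1..N. (K i \<omega> - p i \<omega>) * (s * g i)) + q_lim * (\<Sum>i=1..N. g i)"
    by (simp add: sum.distrib sum_distrib_left)
  then have decomp: "(1 / real N) * (\<Sum>i=1..N. w i \<omega> * G i \<omega>) - q_lim * \<gamma>
      = (1 / real N) * (\<Sum>i=1..N. R i) + (1 / real N) * (\<Sum>i=1..N. (K i \<omega> - p i \<omega>) * (s * g i))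
        + q_lim * ((1 / real N) * (\<Sum>i=1..N. g i) - \<gamma>)"
    by (simp add: algebra_simps)
  have "\<bar>R i\<bar> \<le> \<bar>G i \<omega> - g i\<bar> + B * \<bar>q i \<omega> - q_lim\<bar>" if "i \<in> {1..N}" for i
  proof -
    have i: "1 \<le> i" using that by simp
    have "\<bar>w i \<omega> * (G i \<omega> - g i)\<bar> \<le> \<bar>G i \<omega> - g i\<bar>"
      using w_01[OF i \<omega>] by auto
    moreover have "\<bar>(q i \<omega> - q_lim) * g i\<bar> \<le> B * \<bar>q i \<omega> - q_lim\<bar>"
      using g_bounded[OF i] by (simp add: abs_mult mult_right_mono mult.commute[of _ "g i"])
    ultimately show ?thesis
      unfolding R_def using abs_triangle_ineq[of "w i \<omega> * (G i \<omega> - g i)" "(q i \<omega> - q_lim) * g i"]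
      by linarith
  qed
  then have "\<bar>\<Sum>i=1..N. R i\<bar> \<le> (\<Sum>i=1..N. \<bar>G i \<omega> - g i\<bar> + B * \<bar>q i \<omega> - q_lim\<bar>)"
    by (intro order_trans[OF sum_abs sum_mono])
  then have R_mean: "\<bar>(1 / real N) * (\<Sum>i=1..N. R i)\<bar>
      \<le> (1 / real N) * (\<Sum>i=1..N. \<bar>G i \<omega> - g i\<bar> + B * \<bar>q i \<omega> - q_lim\<bar>)"
    by (simp add: abs_mult divide_right_mono)
  have triangle: "\<bar>X + Y + q_lim * Z\<bar> \<le> \<bar>X\<bar> + \<bar>Y\<bar> + q_lim * \<bar>Z\<bar>" for X Y Z :: real
    using abs_triangle_ineq[of "X + Y" "q_lim * Z"] abs_triangle_ineq[of X Y] q_lim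
    by (simp add: abs_mult abs_of_pos)
  show ?thesis
    unfolding decomp by (rule order_trans[OF triangle]) (use R_mean in simp)
qed

lemma
  assumes G_measurable: "\<And>i. 1 \<le> i \<Longrightarrow> G i \<in> borel_measurable M"
    and G_bounded: "\<And>i \<omega>. 1 \<le> i \<Longrightarrow> \<omega> \<in> space M \<Longrightarrow> \<bar>G i \<omega>\<bar> \<le> B"
    and G_g: "(\<lambda>i. \<integral>\<omega>. \<bar>G i \<omega> - g i\<bar> \<partial>M) \<longlonglongrightarrow> 0"
  shows integrable_weighted_deviation:
      "1 \<le> i \<Longrightarrow> integrable M (\<lambda>\<omega>. \<bar>G i \<omega> - g i\<bar> + B * \<bar>q i \<omega> - q_lim\<bar>)"
    and integral_weighted_deviation_tendsto:
      "(\<lambda>i. \<integral>\<omega>. \<bar>G i \<omega> - g i\<bar> + B * \<bar>q i \<omega> - q_lim\<bar> \<partial>M) \<longlonglongrightarrow> 0"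
proof -
  have int: "integrable M (\<lambda>\<omega>. \<bar>G i \<omega> - g i\<bar>)" "integrable M (\<lambda>\<omega>. \<bar>q i \<omega> - q_lim\<bar>)"
    if "1 \<le> i" for i
  proof -
    have "integrable M (G i)"
      using that G_measurable G_bounded by (intro integrable_if_abs_le[where B = B]) auto
    moreover have "integrable M (q i)"
      using that q_measurable q_bounds \<delta> by (intro integrable_if_abs_le[where B = 1]) force+
    ultimately show "integrable M (\<lambda>\<omega>. \<bar>G i \<omega> - g i\<bar>)" "integrable M (\<lambda>\<omega>. \<bar>q i \<omega> - q_lim\<bar>)"
      by auto
  qed
  then show "1 \<le> i \<Longrightarrow> integrable M (\<lambda>\<omega>. \<bar>G i \<omega> - g i\<bar> + B * \<bar>q i \<omega> - q_lim\<bar>)"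
    by auto
  have "(\<lambda>i. (\<integral>\<omega>. \<bar>G i \<omega> - g i\<bar> \<partial>M) + B * (\<integral>\<omega>. \<bar>q i \<omega> - q_lim\<bar> \<partial>M)) \<longlonglongrightarrow> 0 + B * 0"
    using G_g integral_abs_q_tendsto by (intro tendsto_intros)
  then show "(\<lambda>i. \<integral>\<omega>. \<bar>G i \<omega> - g i\<bar> + B * \<bar>q i \<omega> - q_lim\<bar> \<partial>M) \<longlonglongrightarrow> 0"
    using int by (simp add: Lim_transform_eventually eventually_sequentiallyI[of 1])
qed

lemma weighted_mean_conv_in_prob:
  assumes G_measurable: "\<And>i. 1 \<le> i \<Longrightarrow> G i \<in> borel_measurable M"
    and G_bounded: "\<And>i \<omega>. 1 \<le> i \<Longrightarrow> \<omega> \<in> space M \<Longrightarrow> \<bar>G i \<omega>\<bar> \<le> B"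
    and g_bounded: "\<And>i. 1 \<le> i \<Longrightarrow> \<bar>g i\<bar> \<le> B"
    and G_g: "(\<lambda>i. \<integral>\<omega>. \<bar>G i \<omega> - g i\<bar> \<partial>M) \<longlonglongrightarrow> 0"
    and g_mean: "(\<lambda>N. (1 / real N) * (\<Sum>i=1..N. g i)) \<longlonglongrightarrow> \<gamma>"
  shows "conv_in_prob M (\<lambda>N \<omega>. (1 / real N) * (\<Sum>i=1..N. w i \<omega> * G i \<omega>)) (q_lim * \<gamma>)"
proof -
  define D where "D i \<omega> = \<bar>G i \<omega> - g i\<bar> + B * \<bar>q i \<omega> - q_lim\<bar>" for i \<omega>
  define a where "a i \<omega> = s * g i" for i and \<omega> :: 'a
  define mart where "mart N \<omega> = (1 / real N) * (\<Sum>i=1..N. (K i \<omega> - p i \<omega>) * a i \<omega>)" for N \<omega>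
  define Z where "Z N \<omega> = (1 / real N) * (\<Sum>i=1..N. D i \<omega>) + \<bar>mart N \<omega>\<bar>
      + q_lim * \<bar>(1 / real N) * (\<Sum>i=1..N. g i) - \<gamma>\<bar>" for N \<omega>
  have a_past: "a i \<in> borel_measurable (past M K Y0 Y1 i)" for i
    unfolding a_def[abs_def] by simp
  have a_bounded: "\<bar>a i \<omega>\<bar> \<le> \<bar>s\<bar> * B" if "1 \<le> i" for i \<omega>
    using g_bounded[OF that] by (simp add: a_def abs_mult mult_left_mono)
  have int_D: "integrable M (D i)" if "1 \<le> i" for i
    using integrable_weighted_deviation[OF G_measurable G_bounded G_g that] by (simp add: D_def[abs_def])
  have "(\<lambda>N. (\<integral>\<omega>. (1 / real N) * (\<Sum>i=1..N. D i \<omega>) \<partial>M) + (\<integral>\<omega>. \<bar>mart N \<omega>\<bar> \<partial>M)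
      + q_lim * \<bar>(1 / real N) * (\<Sum>i=1..N. g i) - \<gamma>\<bar>) \<longlonglongrightarrow> 0 + 0 + q_lim * 0"
    using int_D integral_weighted_deviation_tendsto[OF G_measurable G_bounded G_g] g_mean
      integral_abs_martingale_mean_tendsto_zero[OF design p_bounds a_past a_bounded]
    unfolding mart_def D_def[symmetric]
    by (intro tendsto_add tendsto_mult_left integral_cesaro_mean_tendsto_zero tendsto_rabs_zero)
      (simp_all add: LIM_zero)
  moreover have "integrable M (\<lambda>\<omega>. (1 / real N) * (\<Sum>i=1..N. D i \<omega>))" for N
    using int_D by (intro integrable_mult_right integrable_sum) auto
  moreover have "integrable M (\<lambda>\<omega>. \<bar>mart N \<omega>\<bar>)" for N
    unfolding mart_def by (intro integrable_abs integrable_martingale_mean[OF design p_bounds a_past a_bounded])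
  ultimately have "(\<lambda>N. \<integral>\<omega>. Z N \<omega> \<partial>M) \<longlonglongrightarrow> 0" and "integrable M (Z N)" for N
    unfolding Z_def[abs_def] by (simp_all add: prob_space)
  moreover have "\<bar>(1 / real N) * (\<Sum>i=1..N. w i \<omega> * G i \<omega>) - q_lim * \<gamma>\<bar> \<le> Z N \<omega>"
    if "\<omega> \<in> space M" for N \<omega>
    unfolding Z_def D_def mart_def a_def
    by (rule weighted_mean_deviation_le[where g = g and B = B, OF that g_bounded])
  ultimately show ?thesis
    by (intro conv_in_prob_if_integral_bound[where Z = Z] always_eventually) auto
qed

lemma integral_abs_residual_square_diff_tendsto:
  "(\<lambda>i. \<integral>\<omega>. \<bar>(y i - ipw_mean w q y (i - 1) \<omega>)\<^sup>2 - (y i - c)\<^sup>2\<bar> \<partial>M) \<longlonglongrightarrow> 0"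
proof -
  define L where "L = 2 * Mb + Mb / \<delta> + \<bar>c\<bar>"
  have L_nonneg: "0 \<le> L"
    unfolding L_def using Mb_nonneg \<delta> by simp
  have "(\<lambda>i. \<integral>\<omega>. \<bar>ipw_mean w q y (i - 1) \<omega> - c\<bar> \<partial>M) \<longlonglongrightarrow> 0"
    using integral_abs_ipw_mean_tendsto
      LIMSEQ_imp_Suc[of "\<lambda>i. \<integral>\<omega>. \<bar>ipw_mean w q y (i - 1) \<omega> - c\<bar> \<partial>M" 0] by simp
  then have upper: "(\<lambda>i. L * (\<integral>\<omega>. \<bar>ipw_mean w q y (i - 1) \<omega> - c\<bar> \<partial>M)) \<longlonglongrightarrow> 0"
    using tendsto_mult_right_zero by blast
  have le: "\<forall>\<^sub>F i in sequentially. (\<integral>\<omega>. \<bar>(y i - ipw_mean w q y (i - 1) \<omega>)\<^sup>2 - (y i - c)\<^sup>2\<bar> \<partial>M)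
      \<le> L * (\<integral>\<omega>. \<bar>ipw_mean w q y (i - 1) \<omega> - c\<bar> \<partial>M)"
  proof (rule eventually_sequentiallyI[of 1])
    fix i :: nat assume i: "1 \<le> i"
    let ?h = "ipw_mean w q y (i - 1)"
    have [measurable]: "?h \<in> borel_measurable M"
      by (rule ipw_mean_measurable)
    have bound: "\<bar>(y i - ?h \<omega>)\<^sup>2 - (y i - c)\<^sup>2\<bar> \<le> L * \<bar>?h \<omega> - c\<bar>" if "\<omega> \<in> space M" for \<omega>
    proof -
      have "\<bar>2 * y i - ?h \<omega> - c\<bar> \<le> L"
        using y_bounded[OF i] abs_ipw_mean_le[OF that, of "i - 1"] unfolding L_def by linarith
      have "(y i - ?h \<omega>)\<^sup>2 - (y i - c)\<^sup>2 = (c - ?h \<omega>) * (2 * y i - ?h \<omega> - c)"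
        by (simp add: power2_eq_square algebra_simps)
      then have "\<bar>(y i - ?h \<omega>)\<^sup>2 - (y i - c)\<^sup>2\<bar> = \<bar>?h \<omega> - c\<bar> * \<bar>2 * y i - ?h \<omega> - c\<bar>"
        by (simp add: abs_mult abs_minus_commute)
      also have "\<dots> \<le> \<bar>?h \<omega> - c\<bar> * L"
        using \<open>\<bar>2 * y i - ?h \<omega> - c\<bar> \<le> L\<close> by (rule mult_left_mono) simp
      finally show ?thesis
        by (simp add: mult.commute)
    qed
    have "integrable M (\<lambda>\<omega>. \<bar>?h \<omega> - c\<bar>)"
      by (rule integrable_abs_ipw_mean_diff)
    then show "(\<integral>\<omega>. \<bar>(y i - ?h \<omega>)\<^sup>2 - (y i - c)\<^sup>2\<bar> \<partial>M) \<le> L * (\<integral>\<omega>. \<bar>?h \<omega> - c\<bar> \<partial>M)"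
      using bound L_nonneg by (subst integral_mult_right_zero[symmetric]) (intro integral_mono'; simp)
  qed
  show ?thesis
    by (rule tendsto_sandwich[OF _ le tendsto_const upper]) simp
qed

lemma weighted_residual_mean_conv_in_prob:
  "conv_in_prob M (\<lambda>N \<omega>. (1 / real N) * (\<Sum>i=1..N. w i \<omega> * (y i - ipw_mean w q y (i - 1) \<omega>)\<^sup>2))
     (q_lim * \<sigma>2)"
proof (rule weighted_mean_conv_in_prob[where B = "(Mb + Mb / \<delta> + \<bar>c\<bar>)\<^sup>2"])
  show "(\<lambda>\<omega>. (y i - ipw_mean w q y (i - 1) \<omega>)\<^sup>2) \<in> borel_measurable M" for i
    using ipw_mean_measurable[of "i - 1"] by measurable
  show "\<bar>(y i - ipw_mean w q y (i - 1) \<omega>)\<^sup>2\<bar> \<le> (Mb + Mb / \<delta> + \<bar>c\<bar>)\<^sup>2"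
    if "1 \<le> i" "\<omega> \<in> space M" for i \<omega>
    using y_bounded[OF that(1)] abs_ipw_mean_le[OF that(2), of "i - 1"]
    by (intro abs_power2_le_if_abs_le) linarith
  show "\<bar>(y i - c)\<^sup>2\<bar> \<le> (Mb + Mb / \<delta> + \<bar>c\<bar>)\<^sup>2" if "1 \<le> i" for i
    using y_bounded[OF that] divide_nonneg_pos[OF Mb_nonneg \<delta>]
    by (intro abs_power2_le_if_abs_le) linarith
qed (use integral_abs_residual_square_diff_tendsto mean_square_about_limit_tendsto[OF y_mean y_var] in auto)

lemma sum_w_measurable: "(\<lambda>\<omega>. \<Sum>i=1..N. w i \<omega>) \<in> borel_measurable M"
  using w_measurable by (intro borel_measurable_sum) simp

lemma arm_fraction_conv_in_prob:
  "conv_in_prob M (\<lambda>N \<omega>. max (\<Sum>i=1..N. w i \<omega>) 1 / real N) q_lim"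
proof (rule conv_in_prob_perturb)
  have "(\<lambda>N. (1 / real N) * (\<Sum>i=1..N. 1)) \<longlonglongrightarrow> 1"
    by (rule Lim_transform_eventually[OF tendsto_const]) (simp add: eventually_sequentiallyI[of 1])
  then have "conv_in_prob M (\<lambda>N \<omega>. (1 / real N) * (\<Sum>i=1..N. w i \<omega> * 1)) (q_lim * 1)"
    by (intro weighted_mean_conv_in_prob[where G = "\<lambda>_ _. 1" and g = "\<lambda>_. 1" and B = 1]) auto
  then show "conv_in_prob M (\<lambda>N \<omega>. (1 / real N) * (\<Sum>i=1..N. w i \<omega>)) q_lim"
    by simp
  show "(\<lambda>\<omega>. (1 / real N) * (\<Sum>i=1..N. w i \<omega>)) \<in> borel_measurable M" for N
    using sum_w_measurable by measurable
  show "(\<lambda>N. 1 / real N) \<longlonglongrightarrow> 0"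
    by (rule lim_const_over_n)
  show "\<bar>max (\<Sum>i=1..N. w i \<omega>) 1 / real N - (1 / real N) * (\<Sum>i=1..N. w i \<omega>)\<bar> \<le> 1 / real N"
    if "\<omega> \<in> space M" for N \<omega>
  proof -
    have "0 \<le> (\<Sum>i=1..N. w i \<omega>)"
      using w_01 that by (intro sum_nonneg) force
    then have "\<bar>max (\<Sum>i=1..N. w i \<omega>) 1 - (\<Sum>i=1..N. w i \<omega>)\<bar> \<le> 1"
      by linarith
    then show ?thesis
      by (simp add: diff_divide_distrib[symmetric] abs_divide divide_right_mono)
  qed
qed

lemma weighted_residual_sum_measurable:
  "(\<lambda>\<omega>. \<Sum>i=1..N. w i \<omega> * (y i - ipw_mean w q y (i - 1) \<omega>)\<^sup>2) \<in> borel_measurable M"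
proof (rule borel_measurable_sum)
  fix i assume "i \<in> {1..N}"
  then have [measurable]: "w i \<in> borel_measurable M"
    using w_measurable by simp
  show "(\<lambda>\<omega>. w i \<omega> * (y i - ipw_mean w q y (i - 1) \<omega>)\<^sup>2) \<in> borel_measurable M"
    using ipw_mean_measurable[of "i - 1"] by measurable
qed

lemma arm_variance_hat_measurable: "arm_variance_hat w q y N \<in> borel_measurable M"
  unfolding arm_variance_hat_def[abs_def]
  using weighted_residual_sum_measurable[of N] sum_w_measurable[of N] by measurable

lemma arm_variance_hat_conv_in_prob: "conv_in_prob M (arm_variance_hat w q y) \<sigma>2"
proof -
  define A where "A N \<omega> = (1 / real N) * (\<Sum>i=1..N. w i \<omega> * (y i - ipw_mean w q y (i - 1) \<omega>)\<^sup>2)" for N \<omega>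
  define D where "D N \<omega> = max (\<Sum>i=1..N. w i \<omega>) 1 / real N" for N \<omega>
  have "conv_in_prob M (\<lambda>N \<omega>. A N \<omega> / D N \<omega>) (q_lim * \<sigma>2 / q_lim)"
  proof (rule conv_in_prob_continuous2[where g = "\<lambda>x y. x / y"])
    show "conv_in_prob M A (q_lim * \<sigma>2)" "conv_in_prob M D q_lim"
      unfolding A_def[abs_def] D_def[abs_def]
      by (fact weighted_residual_mean_conv_in_prob arm_fraction_conv_in_prob)+
    show "A N \<in> borel_measurable M" "D N \<in> borel_measurable M" for N
      unfolding A_def[abs_def] D_def[abs_def]
      using weighted_residual_sum_measurable[of N] sum_w_measurable[of N] by measurable
    show "isCont (\<lambda>z. fst z / snd z) (q_lim * \<sigma>2, q_lim)"
      using q_lim by (auto intro!: continuous_intros)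
  qed
  moreover have "A N \<omega> / D N \<omega> = arm_variance_hat w q y N \<omega>" for N \<omega>
    by (cases "N = 0") (simp_all add: arm_variance_hat_def A_def D_def)
  ultimately show ?thesis
    using q_lim by simp
qed

end

section \<open>Consistency of the variance estimators\<close>

lemma sigma1_hat_sq_eq_arm_variance_hat:
  assumes K01: "\<And>i. 1 \<le> i \<Longrightarrow> K i \<omega> = 0 \<or> K i \<omega> = 1"
  shows "sigma1_hat_sq K p Y0 Y1 N \<omega> = arm_variance_hat K p Y1 N \<omega>"
proof -
  have "(\<Sum>j=1..n. K j \<omega> * Yobs K Y0 Y1 j \<omega> / p j \<omega>) = (\<Sum>j=1..n. K j \<omega> * Y1 j / p j \<omega>)" for n
    using K01 by (intro sum.cong) (fastforce simp: Yobs_def)+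
  then have "Yhat1 K p Y0 Y1 n \<omega> = ipw_mean K p Y1 n \<omega>" for n
    by (simp add: Yhat1_def ipw_mean_def)
  moreover have "(\<Sum>i=1..N. K i \<omega> * (Yobs K Y0 Y1 i \<omega> - Yhat1 K p Y0 Y1 (i - 1) \<omega>)\<^sup>2)
      = (\<Sum>i=1..N. K i \<omega> * (Y1 i - Yhat1 K p Y0 Y1 (i - 1) \<omega>)\<^sup>2)"
    using K01 by (intro sum.cong) (fastforce simp: Yobs_def)+
  ultimately show ?thesis
    by (simp add: sigma1_hat_sq_def arm_variance_hat_def N1_def)
qed

lemma sigma0_hat_sq_eq_arm_variance_hat:
  assumes K01: "\<And>i. 1 \<le> i \<Longrightarrow> K i \<omega> = 0 \<or> K i \<omega> = 1"
  shows "sigma0_hat_sq K p Y0 Y1 N \<omega> = arm_variance_hat (\<lambda>i \<omega>. 1 - K i \<omega>) (\<lambda>i \<omega>. 1 - p i \<omega>) Y0 N \<omega>"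
proof -
  have "(\<Sum>j=1..n. (1 - K j \<omega>) * Yobs K Y0 Y1 j \<omega> / (1 - p j \<omega>))
      = (\<Sum>j=1..n. (1 - K j \<omega>) * Y0 j / (1 - p j \<omega>))" for n
    using K01 by (intro sum.cong) (fastforce simp: Yobs_def)+
  then have "Yhat0 K p Y0 Y1 n \<omega> = ipw_mean (\<lambda>i \<omega>. 1 - K i \<omega>) (\<lambda>i \<omega>. 1 - p i \<omega>) Y0 n \<omega>" for n
    by (simp add: Yhat0_def ipw_mean_def)
  moreover have "(\<Sum>i=1..N. (1 - K i \<omega>) * (Yobs K Y0 Y1 i \<omega> - Yhat0 K p Y0 Y1 (i - 1) \<omega>)\<^sup>2)
      = (\<Sum>i=1..N. (1 - K i \<omega>) * (Y0 i - Yhat0 K p Y0 Y1 (i - 1) \<omega>)\<^sup>2)"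
    using K01 by (intro sum.cong) (fastforce simp: Yobs_def)+
  moreover have "N0 K N \<omega> = (\<Sum>i=1..N. 1 - K i \<omega>)"
    by (simp add: N0_def N1_def sum_subtractf)
  ultimately show ?thesis
    by (simp add: sigma0_hat_sq_def arm_variance_hat_def)
qed

lemma sigma1_hat_sq_conv_in_prob:
  assumes "prob_space M" and design: "sequential_design M K Y0 Y1 p"
    and p_bounds: "\<And>i \<omega>. 1 \<le> i \<Longrightarrow> \<omega> \<in> space M \<Longrightarrow> \<delta> \<le> p i \<omega> \<and> p i \<omega> \<le> 1 - \<delta>"
    and "0 < \<delta>" and "\<And>i. 1 \<le> i \<Longrightarrow> \<bar>Y1 i\<bar> \<le> Mb"
    and "(\<lambda>N. Ybar Y1 N) \<longlonglongrightarrow> c" and "(\<lambda>N. Svar Y1 N) \<longlonglongrightarrow> \<sigma>2"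
    and "conv_in_prob M p ps" and "0 < ps"
  shows "conv_in_prob M (sigma1_hat_sq K p Y0 Y1) \<sigma>2"
    and "sigma1_hat_sq K p Y0 Y1 N \<in> borel_measurable M"
proof -
  interpret ipw_arm M K p Y0 Y1 K p 1 Y1 \<delta> Mb c \<sigma>2 ps
  proof (intro ipw_arm.intro ipw_arm_axioms.intro)
    show "0 \<le> p i \<omega> \<and> p i \<omega> \<le> 1" "\<delta> \<le> p i \<omega> \<and> p i \<omega> \<le> 1"
      if "1 \<le> i" "\<omega> \<in> space M" for i \<omega>
      using p_bounds[OF that] \<open>0 < \<delta>\<close> by linarith+
  qed (use assms sequential_design_K_01[OF design] sequential_design_p_measurable[OF design] in auto)
  have eq: "sigma1_hat_sq K p Y0 Y1 N \<omega> = arm_variance_hat K p Y1 N \<omega>" if "\<omega> \<in> space M" for N \<omega>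
    using sequential_design_K_01[OF design _ that] by (rule sigma1_hat_sq_eq_arm_variance_hat)
  show "conv_in_prob M (sigma1_hat_sq K p Y0 Y1) \<sigma>2"
    using arm_variance_hat_conv_in_prob by (subst conv_in_prob_cong[OF eq]) auto
  show "sigma1_hat_sq K p Y0 Y1 N \<in> borel_measurable M"
    using arm_variance_hat_measurable by (subst measurable_cong[OF eq]) auto
qed

lemma sigma0_hat_sq_conv_in_prob:
  assumes "prob_space M" and design: "sequential_design M K Y0 Y1 p"
    and p_bounds: "\<And>i \<omega>. 1 \<le> i \<Longrightarrow> \<omega> \<in> space M \<Longrightarrow> \<delta> \<le> p i \<omega> \<and> p i \<omega> \<le> 1 - \<delta>"
    and "0 < \<delta>" and "\<And>i. 1 \<le> i \<Longrightarrow> \<bar>Y0 i\<bar> \<le> Mb"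
    and "(\<lambda>N. Ybar Y0 N) \<longlonglongrightarrow> c" and "(\<lambda>N. Svar Y0 N) \<longlonglongrightarrow> \<sigma>2"
    and p_conv: "conv_in_prob M p ps" and "ps < 1"
  shows "conv_in_prob M (sigma0_hat_sq K p Y0 Y1) \<sigma>2"
    and "sigma0_hat_sq K p Y0 Y1 N \<in> borel_measurable M"
proof -
  have "conv_in_prob M (\<lambda>i \<omega>. 1 - p i \<omega>) (1 - ps)"
    using p_conv unfolding conv_in_prob_def by (simp add: abs_minus_commute)
  then interpret ipw_arm M K p Y0 Y1 "\<lambda>i \<omega>. 1 - K i \<omega>" "\<lambda>i \<omega>. 1 - p i \<omega>" "-1" Y0 \<delta> Mb c \<sigma>2 "1 - ps"
  proof (intro ipw_arm.intro ipw_arm_axioms.intro)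
    show "0 \<le> p i \<omega> \<and> p i \<omega> \<le> 1" "\<delta> \<le> 1 - p i \<omega> \<and> 1 - p i \<omega> \<le> 1"
      if "1 \<le> i" "\<omega> \<in> space M" for i \<omega>
      using p_bounds[OF that] \<open>0 < \<delta>\<close> by linarith+
    show "(\<lambda>\<omega>. 1 - p i \<omega>) \<in> borel_measurable (past M K Y0 Y1 i)" if "1 \<le> i" for i
      using sequential_design_p_measurable[OF design that] by measurable
    show "1 - K i \<omega> = 0 \<or> 1 - K i \<omega> = 1" if "1 \<le> i" "\<omega> \<in> space M" for i \<omega>
      using sequential_design_K_01[OF design that] by auto
  qed (use assms sequential_design_K_01[OF design] in auto)
  have eq: "sigma0_hat_sq K p Y0 Y1 N \<omega> = arm_variance_hat (\<lambda>i \<omega>. 1 - K i \<omega>) (\<lambda>i \<omega>. 1 - p i \<omega>) Y0 N \<omega>"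
    if "\<omega> \<in> space M" for N \<omega>
    using sequential_design_K_01[OF design _ that] by (rule sigma0_hat_sq_eq_arm_variance_hat)
  show "conv_in_prob M (sigma0_hat_sq K p Y0 Y1) \<sigma>2"
    using arm_variance_hat_conv_in_prob by (subst conv_in_prob_cong[OF eq]) auto
  show "sigma0_hat_sq K p Y0 Y1 N \<in> borel_measurable M"
    using arm_variance_hat_measurable by (subst measurable_cong[OF eq]) auto
qed

lemma V_hat_strong_conv_in_prob:
  assumes "prob_space M"
    and "conv_in_prob M (sigma0_hat_sq K p Y0 Y1) \<sigma>0" "\<And>N. sigma0_hat_sq K p Y0 Y1 N \<in> borel_measurable M"
    and "conv_in_prob M (sigma1_hat_sq K p Y0 Y1) \<sigma>1" "\<And>N. sigma1_hat_sq K p Y0 Y1 N \<in> borel_measurable M"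
  shows "conv_in_prob M (V_hat_strong ps K p Y0 Y1)
    ((sqrt \<sigma>0 * sqrt (ps / (1 - ps)) + sqrt \<sigma>1 * sqrt ((1 - ps) / ps))\<^sup>2)"
  unfolding V_hat_strong_def[abs_def]
  using prob_space.conv_in_prob_continuous2[OF assms(1) assms(2,4,3,5),
      where g = "\<lambda>x y. (sqrt x * sqrt (ps / (1 - ps)) + sqrt y * sqrt ((1 - ps) / ps))\<^sup>2"]
  by (simp add: continuous_intros)

lemma square_sqrt_combination:
  assumes "0 < ps" "ps < 1" "0 \<le> a" "0 \<le> b"
  shows "(sqrt a * sqrt (ps / (1 - ps)) + sqrt b * sqrt ((1 - ps) / ps))\<^sup>2
    = a * (ps / (1 - ps)) + b * ((1 - ps) / ps) + 2 * (sqrt a * sqrt b)"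
proof -
  have "sqrt (ps / (1 - ps)) * sqrt ((1 - ps) / ps) = 1"
    using assms by (simp add: real_sqrt_mult[symmetric])
  moreover have "(sqrt a * sqrt (ps / (1 - ps)) + sqrt b * sqrt ((1 - ps) / ps))\<^sup>2
    = (sqrt a)\<^sup>2 * (sqrt (ps / (1 - ps)))\<^sup>2 + (sqrt b)\<^sup>2 * (sqrt ((1 - ps) / ps))\<^sup>2
      + 2 * (sqrt a * sqrt b) * (sqrt (ps / (1 - ps)) * sqrt ((1 - ps) / ps))"
    by (simp add: power2_sum power_mult_distrib algebra_simps)
  ultimately show ?thesis
    using assms by simp
qed

theorem theorem5:
  fixes M :: "'a measure" and K p :: "nat \<Rightarrow> 'a \<Rightarrow> real"
    and Y0 Y1 :: "nat \<Rightarrow> real"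
    and ps \<delta> Mb Y0lim Y1lim s0sq s1sq s01 :: real
  assumes "prob_space M"
    and design: "sequential_design M K Y0 Y1 p"
    and delta: "0 < \<delta>" "\<delta> < 1"
    and p_bounds: "\<And>i \<omega>. i \<ge> 1 \<Longrightarrow> \<omega> \<in> space M \<Longrightarrow> \<delta> \<le> p i \<omega> \<and> p i \<omega> \<le> 1 - \<delta>"
    and Y_bounded: "\<And>i. i \<ge> 1 \<Longrightarrow> \<bar>Y0 i\<bar> \<le> Mb \<and> \<bar>Y1 i\<bar> \<le> Mb"
    and Y0_mean: "(\<lambda>N. Ybar Y0 N) \<longlonglongrightarrow> Y0lim"
    and Y1_mean: "(\<lambda>N. Ybar Y1 N) \<longlonglongrightarrow> Y1lim"
    and s0: "(\<lambda>N. Svar Y0 N) \<longlonglongrightarrow> s0sq"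
    and s1: "(\<lambda>N. Svar Y1 N) \<longlonglongrightarrow> s1sq"
    and s01: "(\<lambda>N. Scov Y0 Y1 N) \<longlonglongrightarrow> s01"
    and s0_pos: "s0sq > 0" and s1_pos: "s1sq > 0"
    and ps: "0 < ps" "ps < 1"
    and strong_stable: "conv_in_prob M p ps"
  shows "conv_in_prob M (sigma0_hat_sq K p Y0 Y1) s0sq
       \<and> conv_in_prob M (sigma1_hat_sq K p Y0 Y1) s1sq
       \<and> conv_in_prob M (V_hat_strong ps K p Y0 Y1)
           ((sqrt s0sq * sqrt (ps / (1 - ps)) + sqrt s1sq * sqrt ((1 - ps) / ps))\<^sup>2)
       \<and> (sqrt s0sq * sqrt (ps / (1 - ps)) + sqrt s1sq * sqrt ((1 - ps) / ps))\<^sup>2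
           \<ge> s0sq * (ps / (1 - ps)) + s1sq * ((1 - ps) / ps) + 2 * s01
       \<and> ((\<forall>N\<ge>1. \<exists>c>0. \<forall>i\<in>{1..N}. Y1 i - Ybar Y1 N = c * (Y0 i - Ybar Y0 N))
           \<longrightarrow> conv_in_prob M (V_hat_strong ps K p Y0 Y1)
                 (s0sq * (ps / (1 - ps)) + s1sq * ((1 - ps) / ps) + 2 * s01))"
proof -
  have sigma0: "conv_in_prob M (sigma0_hat_sq K p Y0 Y1) s0sq"
    "\<And>N. sigma0_hat_sq K p Y0 Y1 N \<in> borel_measurable M"
    using sigma0_hat_sq_conv_in_prob[OF assms(1) design p_bounds delta(1) _ Y0_mean s0 strong_stable ps(2)]
      Y_bounded by blast+
  have sigma1: "conv_in_prob M (sigma1_hat_sq K p Y0 Y1) s1sq"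
    "\<And>N. sigma1_hat_sq K p Y0 Y1 N \<in> borel_measurable M"
    using sigma1_hat_sq_conv_in_prob[OF assms(1) design p_bounds delta(1) _ Y1_mean s1 strong_stable ps(1)]
      Y_bounded by blast+
  have limit: "(sqrt s0sq * sqrt (ps / (1 - ps)) + sqrt s1sq * sqrt ((1 - ps) / ps))\<^sup>2
      = s0sq * (ps / (1 - ps)) + s1sq * ((1 - ps) / ps) + 2 * (sqrt s0sq * sqrt s1sq)"
    using ps Svar_limit_nonneg[OF s0] Svar_limit_nonneg[OF s1] by (rule square_sqrt_combination)
  have V_hat: "conv_in_prob M (V_hat_strong ps K p Y0 Y1)
      ((sqrt s0sq * sqrt (ps / (1 - ps)) + sqrt s1sq * sqrt ((1 - ps) / ps))\<^sup>2)"
    by (rule V_hat_strong_conv_in_prob[OF assms(1) sigma0 sigma1])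
  show ?thesis
    using sigma0(1) sigma1(1) V_hat Scov_limit_le[OF s0 s1 s01]
      Scov_limit_eq_if_proportional[OF s0 s1 s01]
    unfolding limit by auto
qed

end
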